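(* Under the standing setup (assumptions (A1)–(A4)), let $(U_n)_n$ be the first-come-first-served process. (a) If $r<\mu$, then $q_U=1$. (b) If $r>\mu$, then $q_U<1$, and moreover $\mathrm P[\lim_nU_n=0\mid U_0=L]\to0$ as $L\to\infty$.
   Context: Standing setup. On a probability space $(\Omega,\mathcal F,\mathrm P)$ there are three mutually independent double arrays $(D_n^k)_{n\ge0,k\ge1}$, $(X_n^k)_{n\ge0,k\ge1}$, $(R_n^k)_{n\ge0,k\ge1}$, each consisting of i.i.d. random variables: $D_n^k\in\{0,1,2,\dots\}$ with law $p_j=\mathrm P[D_n^k=j]$ and mean $m$; $X_n^k\ge0$ real-valued with continuous distribution function $F$ and mean $\mu$; $R_n^k\ge0$ real-valued with mean $r$. Standing assumptions: (A1) $1<m<\infty$, $r<\infty$, $0<\mu<\infty$; (A2) $p_0>0$ and $p_k>0$ for some $k\ge2$; (A3) for the process under consideration started at $1$, every finite positive state is reached with positive probability; (A4) $D_n^k,X_n^k,R_n^k$ have finite variances. Write $D_n(k)=\sum_{j=1}^kD_n^j$, $R_n(k)=\sum_{j=1}^kR_n^j$. The fcfs counting function is $C(0,\varnothing,s)=0$ and, for $t\ge1$, $C(t,(x_k)_{k=1}^t,s)=0$ if $x_1>s$, otherwise $\max\{1\le k\le t:\sum_{j=1}^kx_j\le s\}$ (claims served in their given order). The fcfs-process started at $L$ is $U_0=L$, $U_{n+1}=C\big(D_n(U_n),(X_n^k)_{k=1}^{D_n(U_n)},R_n(U_n)\big)$; unless stated $U_0=1$. $q_U=\mathrm P[\lim_nU_n=0\mid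 U_0=1]$. *)

theory Defs
  imports "HOL-Probability.Probability"
begin

text \<open>The fcfs counting function C(t, (x_k)_{k=1..t}, s). The sequence is given as a
function x :: nat => real of which only the values x 1, ..., x t are used.\<close>
definition fcfs_count :: "nat \<Rightarrow> (nat \<Rightarrow> real) \<Rightarrow> real \<Rightarrow> nat" where
  "fcfs_count t x s =
     (if t = 0 then 0
      else if x 1 > s then 0
      else Max {k \<in> {1..t}. (\<Sum>j=1..k. x j) \<le> s})"

primrec fcfs_proc ::
  "(nat \<Rightarrow> nat \<Rightarrow> 'a \<Rightarrow> nat) \<Rightarrow> (nat \<Rightarrow> nat \<Rightarrow> 'a \<Rightarrow> real) \<Rightarrow> (nat \<Rightarrow> nat \<Rightarrow> 'a \<Rightarrow> real)
    \<Rightarrow> nat \<Rightarrow> nat \<Rightarrow> 'a \<Rightarrow> nat" where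
  "fcfs_proc D X R L 0 \<omega> = L"
| "fcfs_proc D X R L (Suc n) \<omega> =
     fcfs_count (\<Sum>j=1..fcfs_proc D X R L n \<omega>. D n j \<omega>)
                (\<lambda>k. X n k \<omega>)
                (\<Sum>j=1..fcfs_proc D X R L n \<omega>. R n j \<omega>)"

definition fcfs_ext_prob ::
  "'a measure \<Rightarrow> (nat \<Rightarrow> nat \<Rightarrow> 'a \<Rightarrow> nat) \<Rightarrow> (nat \<Rightarrow> nat \<Rightarrow> 'a \<Rightarrow> real) \<Rightarrow> (nat \<Rightarrow> nat \<Rightarrow> 'a \<Rightarrow> real)
    \<Rightarrow> nat \<Rightarrow> real" where
  "fcfs_ext_prob M D X R L =
     measure M {\<omega> \<in> space M. (\<lambda>n. fcfs_proc D X R L n \<omega>) \<longlonglongrightarrow> 0}"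

end

theory Submission
  imports Defs
begin

text \<open>
  If \<open>r > \<mu>\<close>, a generation of \<open>u\<close> claims has about \<open>m u\<close> offspring and a budget of about
  \<open>r u\<close>, so by Chebyshev's inequality fewer than \<open>c u\<close> of them are served, for a fixed \<open>c > 1\<close>,
  only with probability \<open>O(1/u)\<close>. Summing these probabilities along geometric growth \<open>c\<^sup>i j\<close>
  bounds the extinction probability from state \<open>j\<close> by \<open>O(1/j)\<close>, which gives (b); (A3) makes
  some large state reachable from 1.

  If \<open>r < \<mu>\<close>, truncate service times at a level \<open>a\<close> with \<open>E min(X, a) > r\<close>. Whether a claim is
  served depends only on the claims ahead of it, so (Wald) \<open>E min(X, a)\<close> times the expected
  number of served claims is at most the expected truncated work served, which is at most
  \<open>r u + a\<close>. Hence the expected population stays bounded. Since a state \<open>u \<le> K\<close> dies out in one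
  step with probability at least \<open>p\<^sub>0\<^sup>K\<close>, the probabilities of \<open>1 \<le> U\<^sub>n \<le> K\<close> are summable;
  together with Markov's inequality for \<open>U\<^sub>n > K\<close> this forces \<open>P(U\<^sub>n = 0) \<rightarrow> 1\<close>, which is (a).
\<close>

section \<open>First-come-first-served counting\<close>

lemma fcfs_count_0 [simp]: "fcfs_count 0 x s = 0"
  by (simp add: fcfs_count_def)

lemma fcfs_count_cong:
  assumes "\<And>k. k \<in> {1..t} \<Longrightarrow> x k = y k"
  shows "fcfs_count t x s = fcfs_count t y s"
proof (cases "t = 0")
  case False
  then have "x 1 = y 1" using assms by auto
  moreover have "{k \<in> {1..t}. (\<Sum>j=1..k. x j) \<le> s} = {k \<in> {1..t}. (\<Sum>j=1..k. y j) \<le> s}"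
    using assms by (auto intro!: sum.cong)
  ultimately show ?thesis by (simp add: fcfs_count_def)
qed simp

lemma fcfs_count_ge:
  assumes "1 \<le> k" "k \<le> t" "(\<Sum>j=1..k. x j) \<le> s" "\<And>j. j \<ge> 1 \<Longrightarrow> x j \<ge> 0"
  shows "k \<le> fcfs_count t x s"
proof -
  have "x 1 \<le> (\<Sum>j=1..k. x j)"
    using assms(1,4) by (intro member_le_sum) auto
  then have "\<not> x 1 > s" using assms(3) by simp
  moreover have "k \<le> Max {k \<in> {1..t}. (\<Sum>j=1..k. x j) \<le> s}"
    using assms by (intro Max_ge) auto
  ultimately show ?thesis using assms by (simp add: fcfs_count_def)
qed

text \<open>Replacing the service times by smaller nonnegative ones \<open>y\<close> and admitting claim \<open>k\<close> as soon
  as the work \<open>y 1 + \<dots> + y (k - 1)\<close> ahead of it fits into \<open>s\<close> can only admit more claims.\<close>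

lemma fcfs_count_le_card:
  assumes "\<And>j. j \<ge> 1 \<Longrightarrow> y j \<le> x j" "\<And>j. j \<ge> 1 \<Longrightarrow> 0 \<le> y j"
  shows "fcfs_count t x s \<le> card {k \<in> {1..t}. (\<Sum>j=1..k-1. y j) \<le> s}"
proof (cases "t = 0 \<or> x 1 > s")
  case True then show ?thesis by (auto simp: fcfs_count_def)
next
  case False
  let ?S = "{k \<in> {1..t}. (\<Sum>j=1..k. x j) \<le> s}"
  let ?T = "{k \<in> {1..t}. (\<Sum>j=1..k-1. y j) \<le> s}"
  have "1 \<in> ?S" using False by auto
  then have "Max ?S \<in> ?S" by (intro Max_in) auto
  then have "{1..Max ?S} \<subseteq> ?T"
  proof (intro subsetI)
    fix k assume k: "k \<in> {1..Max ?S}" and max: "Max ?S \<in> ?S"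
    have "(\<Sum>j=1..k-1. y j) \<le> (\<Sum>j=1..Max ?S. y j)"
      using k assms(2) by (intro sum_mono2) auto
    also have "\<dots> \<le> (\<Sum>j=1..Max ?S. x j)" using assms(1) by (intro sum_mono) auto
    also have "\<dots> \<le> s" using max by auto
    finally show "k \<in> ?T" using k max by auto
  qed
  then have "card {1..Max ?S} \<le> card ?T" by (intro card_mono) auto
  then show ?thesis using False by (simp add: fcfs_count_def)
qed

text \<open>Every admitted claim starts before the budget \<open>s\<close> is exhausted, so the admitted work overshoots
  \<open>s\<close> by at most one claim.\<close>

lemma admitted_work_le:
  fixes y :: "nat \<Rightarrow> real"
  assumes "\<And>j. 0 \<le> y j" "\<And>j. y j \<le> a" "0 \<le> s"
  shows "(\<Sum>k=1..t. if (\<Sum>j=1..k-1. y j) \<le> s then y k else 0) \<le> s + a"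
proof -
  have "(\<Sum>k=1..t. if (\<Sum>j=1..k-1. y j) \<le> s then y k else 0) \<le> s + a \<and>
        (\<Sum>k=1..t. if (\<Sum>j=1..k-1. y j) \<le> s then y k else 0) \<le> (\<Sum>j=1..t. y j)"
  proof (induction t)
    case (Suc t)
    show ?case
      using Suc.IH assms(1,2)[of "Suc t"] by (cases "(\<Sum>j=1..t. y j) \<le> s") auto
  qed (use assms(1,2)[of 0] assms(3) in simp)
  then show ?thesis ..
qed

definition fcfs_step ::
  "(nat \<Rightarrow> nat \<Rightarrow> 'a \<Rightarrow> nat) \<Rightarrow> (nat \<Rightarrow> nat \<Rightarrow> 'a \<Rightarrow> real) \<Rightarrow> (nat \<Rightarrow> nat \<Rightarrow> 'a \<Rightarrow> real)
    \<Rightarrow> nat \<Rightarrow> nat \<Rightarrow> 'a \<Rightarrow> nat" where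
  "fcfs_step D X R n u \<omega> = fcfs_count (\<Sum>j=1..u. D n j \<omega>) (\<lambda>k. X n k \<omega>) (\<Sum>j=1..u. R n j \<omega>)"

lemma fcfs_proc_Suc [simp]: "fcfs_proc D X R L (Suc n) \<omega> = fcfs_step D X R n (fcfs_proc D X R L n \<omega>) \<omega>"
  by (simp add: fcfs_step_def)

declare fcfs_proc.simps(2) [simp del]

lemma fcfs_step_0 [simp]: "fcfs_step D X R n 0 \<omega> = 0"
  by (simp add: fcfs_step_def)

lemma fcfs_proc_cong:
  assumes "\<And>a b. a < n \<Longrightarrow> b \<ge> 1 \<Longrightarrow>
      D a b \<omega> = D' a b \<omega>' \<and> X a b \<omega> = X' a b \<omega>' \<and> R a b \<omega> = R' a b \<omega>'"
  shows "fcfs_proc D X R L n \<omega> = fcfs_proc D' X' R' L n \<omega>'"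
  using assms
proof (induction n)
  case (Suc n)
  then have IH: "fcfs_proc D X R L n \<omega> = fcfs_proc D' X' R' L n \<omega>'"
    by auto
  have "(\<Sum>j=1..u. D n j \<omega>) = (\<Sum>j=1..u. D' n j \<omega>')" "(\<Sum>j=1..u. R n j \<omega>) = (\<Sum>j=1..u. R' n j \<omega>')"
    "fcfs_count t (\<lambda>k. X n k \<omega>) s = fcfs_count t (\<lambda>k. X' n k \<omega>') s" for u t s
    using Suc.prems by (auto intro!: sum.cong fcfs_count_cong)
  then show ?case
    by (simp add: IH fcfs_step_def)
qed simp

lemma fcfs_proc_absorbed:
  assumes "fcfs_proc D X R L n \<omega> = 0"
  shows "n \<le> m \<Longrightarrow> fcfs_proc D X R L m \<omega> = 0"
proof (induction m)
  case (Suc m)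
  then show ?case using assms by (cases "n = Suc m") simp_all
qed (use assms in simp)

lemma fcfs_proc_tendsto_0_iff:
  "(\<lambda>n. fcfs_proc D X R L n \<omega>) \<longlonglongrightarrow> 0 \<longleftrightarrow> (\<exists>n. fcfs_proc D X R L n \<omega> = 0)"
proof
  assume "(\<lambda>n. fcfs_proc D X R L n \<omega>) \<longlonglongrightarrow> 0"
  then have "eventually (\<lambda>n. fcfs_proc D X R L n \<omega> < 1) sequentially"
    by (rule order_tendstoD) simp
  then obtain n where "fcfs_proc D X R L n \<omega> < 1"
    by (auto dest: eventually_happens)
  then show "\<exists>n. fcfs_proc D X R L n \<omega> = 0" by auto
next
  assume "\<exists>n. fcfs_proc D X R L n \<omega> = 0"
  then obtain n where zero: "fcfs_proc D X R L n \<omega> = 0" ..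
  have "eventually (\<lambda>m. fcfs_proc D X R L m \<omega> = 0) sequentially"
    by (rule eventually_sequentiallyI[of n]) (rule fcfs_proc_absorbed[OF zero])
  then show "(\<lambda>n. fcfs_proc D X R L n \<omega>) \<longlonglongrightarrow> 0"
    by (rule tendsto_eventually)
qed

lemma exists_growth_failure:
  fixes u :: "nat \<Rightarrow> nat" and c :: real
  assumes "1 \<le> c" "1 \<le> u 0" "u m = 0"
  shows "\<exists>i. c ^ i * real (u 0) \<le> real (u i) \<and> real (u (Suc i)) < c * real (u i)"
proof (rule ccontr)
  assume "\<not> ?thesis"
  then have grow: "c * real (u i) \<le> real (u (Suc i))" if "c ^ i * real (u 0) \<le> real (u i)" for i
    using that by (auto simp: not_less)
  have growth: "c ^ i * real (u 0) \<le> real (u i)" for i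
  proof (induction i)
    case (Suc i)
    have "c ^ Suc i * real (u 0) \<le> c * real (u i)"
      using Suc.IH assms(1) by (simp add: mult.assoc mult_left_mono)
    then show ?case using grow[OF Suc.IH] by linarith
  qed simp
  have "1 * 1 \<le> c ^ m * real (u 0)"
    using assms(1,2) by (intro mult_mono one_le_power) auto
  also have "\<dots> \<le> real (u m)"
    by (rule growth)
  finally show False
    using assms(3) by simp
qed

text \<open>This involves only the service times of earlier claims, so it is independent of \<open>X n k\<close>.\<close>

definition fcfs_admitted ::
  "(nat \<Rightarrow> nat \<Rightarrow> 'a \<Rightarrow> nat) \<Rightarrow> (nat \<Rightarrow> nat \<Rightarrow> 'a \<Rightarrow> real) \<Rightarrow> (nat \<Rightarrow> nat \<Rightarrow> 'a \<Rightarrow> real)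
    \<Rightarrow> nat \<Rightarrow> nat \<Rightarrow> real \<Rightarrow> nat \<Rightarrow> 'a \<Rightarrow> bool" where
  "fcfs_admitted D X R n u a k \<omega> \<longleftrightarrow> k \<le> (\<Sum>j=1..u. D n j \<omega>) \<and>
     (\<Sum>j=1..k-1. min (X n j \<omega>) a) \<le> (\<Sum>j=1..u. R n j \<omega>)"

lemma measurable_fcfs_count [measurable]:
  assumes [measurable]: "t \<in> measurable N (count_space UNIV)" "\<And>k. x k \<in> borel_measurable N"
    "s \<in> borel_measurable N"
  shows "(\<lambda>\<omega>. fcfs_count (t \<omega>) (\<lambda>k. x k \<omega>) (s \<omega>)) \<in> measurable N (count_space UNIV)"
proof -
  have "(\<lambda>\<omega>. fcfs_count i (\<lambda>k. x k \<omega>) (s \<omega>)) \<in> measurable N (count_space UNIV)" for i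
    unfolding fcfs_count_def by measurable
  then show ?thesis
    by (rule measurable_compose_countable[where f = "\<lambda>i \<omega>. fcfs_count i (\<lambda>k. x k \<omega>) (s \<omega>)"])
      measurable
qed

lemma measurable_sum_upto_nat [measurable]:
  fixes f :: "nat \<Rightarrow> 'b \<Rightarrow> nat"
  assumes [measurable]: "u \<in> measurable N (count_space UNIV)" "\<And>j. f j \<in> measurable N (count_space UNIV)"
  shows "(\<lambda>\<omega>. \<Sum>j=1..u \<omega>. f j \<omega>) \<in> measurable N (count_space UNIV)"
  by (rule measurable_compose_countable[where f = "\<lambda>i \<omega>. \<Sum>j=1..i. f j \<omega>"]) measurable

lemma measurable_sum_upto_real [measurable]:
  fixes f :: "nat \<Rightarrow> 'b \<Rightarrow> real"
  assumes [measurable]: "u \<in> measurable N (count_space UNIV)" "\<And>j. f j \<in> borel_measurable N"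
  shows "(\<lambda>\<omega>. \<Sum>j=1..u \<omega>. f j \<omega>) \<in> borel_measurable N"
  by (rule measurable_compose_countable[where f = "\<lambda>i \<omega>. \<Sum>j=1..i. f j \<omega>"]) measurable

lemma measurable_fcfs_step [measurable]:
  assumes [measurable]: "\<And>n k. D n k \<in> measurable N (count_space UNIV)"
    "\<And>n k. X n k \<in> borel_measurable N" "\<And>n k. R n k \<in> borel_measurable N"
  shows "fcfs_step D X R n u \<in> measurable N (count_space UNIV)"
  unfolding fcfs_step_def by measurable

lemma measurable_fcfs_proc [measurable]:
  assumes [measurable]: "\<And>n k. D n k \<in> measurable N (count_space UNIV)"
    "\<And>n k. X n k \<in> borel_measurable N" "\<And>n k. R n k \<in> borel_measurable N"
  shows "fcfs_proc D X R L n \<in> measurable N (count_space UNIV)"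
  by (induction n) simp_all

lemma measurable_fcfs_admitted [measurable]:
  assumes [measurable]: "\<And>n k. D n k \<in> measurable N (count_space UNIV)"
    "\<And>n k. X n k \<in> borel_measurable N" "\<And>n k. R n k \<in> borel_measurable N"
  shows "Measurable.pred N (fcfs_admitted D X R n u a k)"
proof -
  have "(\<lambda>\<omega>. \<Sum>j=1..u. D n j \<omega>) \<in> measurable N (count_space UNIV)"
    using measurable_sum_upto_nat[of "\<lambda>_. u"] by simp
  then have [measurable]: "Measurable.pred N (\<lambda>\<omega>. k \<le> (\<Sum>j=1..u. D n j \<omega>))"
    by (rule measurable_compose) simp
  show ?thesis
    unfolding fcfs_admitted_def by measurable
qed

lemma emeasure_Collect_eq_nn_integral:
  assumes "{x \<in> space M. P x} \<in> sets M"
  shows "emeasure M {x \<in> space M. P x} = (\<integral>\<^sup>+x. of_bool (P x) \<partial>M)"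
  using nn_integral_indicator[OF assms]
  by (simp add: indicator_def of_bool_def cong: nn_integral_cong)

lemma (in prob_space) indep_var_nn_integral:
  assumes ind: "indep_var S X T Y" and h: "h \<in> borel_measurable (S \<Otimes>\<^sub>M T)"
  shows "(\<integral>\<^sup>+\<omega>. h (X \<omega>, Y \<omega>) \<partial>M) = (\<integral>\<^sup>+\<omega>. (\<integral>\<^sup>+\<omega>'. h (X \<omega>, Y \<omega>') \<partial>M) \<partial>M)"
proof -
  have rv[measurable]: "random_variable S X" "random_variable T Y"
    using ind by (blast dest: indep_var_rv1 indep_var_rv2)+
  interpret PX: prob_space "distr M S X" by (rule prob_space_distr) (fact rv)
  interpret PY: prob_space "distr M T Y" by (rule prob_space_distr) (fact rv)
  interpret PXY: pair_sigma_finite "distr M S X" "distr M T Y" ..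
  have hm: "h \<in> borel_measurable (distr M S X \<Otimes>\<^sub>M distr M T Y)"
    using h by (simp cong: measurable_cong_sets)
  have inner: "(\<integral>\<^sup>+y. h (x, y) \<partial>distr M T Y) = (\<integral>\<^sup>+\<omega>'. h (x, Y \<omega>') \<partial>M)" if "x \<in> space S" for x
    using that h by (subst nn_integral_distr) auto
  have inner_meas: "(\<lambda>x. \<integral>\<^sup>+\<omega>'. h (x, Y \<omega>') \<partial>M) \<in> borel_measurable S"
    using measurable_cong[of S "\<lambda>x. \<integral>\<^sup>+y. h (x, y) \<partial>distr M T Y"] inner
      PY.borel_measurable_nn_integral_fst[OF hm] by simp
  have "(\<integral>\<^sup>+\<omega>. h (X \<omega>, Y \<omega>) \<partial>M) = (\<integral>\<^sup>+z. h z \<partial>distr M (S \<Otimes>\<^sub>M T) (\<lambda>x. (X x, Y x)))"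
    using h by (subst nn_integral_distr) auto
  also have "\<dots> = (\<integral>\<^sup>+z. h z \<partial>(distr M S X \<Otimes>\<^sub>M distr M T Y))"
    using ind by (simp add: indep_var_distribution_eq)
  also have "\<dots> = (\<integral>\<^sup>+x. \<integral>\<^sup>+y. h (x, y) \<partial>distr M T Y \<partial>distr M S X)"
    using PY.nn_integral_fst[OF hm] by simp
  also have "\<dots> = (\<integral>\<^sup>+x. \<integral>\<^sup>+\<omega>'. h (x, Y \<omega>') \<partial>M \<partial>distr M S X)"
    by (intro nn_integral_cong) (simp add: inner)
  also have "\<dots> = (\<integral>\<^sup>+\<omega>. (\<integral>\<^sup>+\<omega>'. h (X \<omega>, Y \<omega>') \<partial>M) \<partial>M)"
    using inner_meas by (subst nn_integral_distr) auto
  finally show ?thesis .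
qed

lemma (in prob_space) indep_vars_imp_indep_var:
  assumes ind: "indep_vars M' X I" and "i \<in> I" "j \<in> I" "i \<noteq> j"
  shows "indep_var (M' i) (X i) (M' j) (X j)"
proof -
  have "indep_var (PiM {i} M') (\<lambda>\<omega>. restrict (\<lambda>k. X k \<omega>) {i}) (PiM {j} M') (\<lambda>\<omega>. restrict (\<lambda>k. X k \<omega>) {j})"
    using assms by (intro indep_var_restrict) auto
  from indep_var_compose[OF this measurable_component_singleton measurable_component_singleton]
  show ?thesis by (simp add: comp_def)
qed

lemma same_distr_integrable_iff:
  fixes h :: "'b \<Rightarrow> real"
  assumes "distr M N f = distr M N g" "f \<in> measurable M N" "g \<in> measurable M N"
    "h \<in> borel_measurable N"
  shows "integrable M (\<lambda>\<omega>. h (f \<omega>)) \<longleftrightarrow> integrable M (\<lambda>\<omega>. h (g \<omega>))"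
  using integrable_distr_eq[OF assms(2,4)] integrable_distr_eq[OF assms(3,4)] assms(1) by simp

lemma same_distr_integral_eq:
  fixes h :: "'b \<Rightarrow> real"
  assumes "distr M N f = distr M N g" "f \<in> measurable M N" "g \<in> measurable M N"
    "h \<in> borel_measurable N"
  shows "(\<integral>\<omega>. h (f \<omega>) \<partial>M) = (\<integral>\<omega>. h (g \<omega>) \<partial>M)"
  using integral_distr[OF assms(2,4)] integral_distr[OF assms(3,4)] assms(1) by simp

lemma same_distr_nn_integral_eq:
  assumes "distr M N f = distr M N g" "f \<in> measurable M N" "g \<in> measurable M N"
    "h \<in> borel_measurable N"
  shows "(\<integral>\<^sup>+\<omega>. h (f \<omega>) \<partial>M) = (\<integral>\<^sup>+\<omega>. h (g \<omega>) \<partial>M)"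
  using nn_integral_distr[OF assms(2)] nn_integral_distr[OF assms(3)] assms(1,4) by simp

lemma (in prob_space) centered_products_pairwise_indep:
  fixes Y :: "'i \<Rightarrow> 'a \<Rightarrow> real" and Z :: "'a \<Rightarrow> real"
  assumes rv: "\<And>j. j \<in> J \<Longrightarrow> random_variable borel (Y j)"
    and indep: "\<And>i j. i \<in> J \<Longrightarrow> j \<in> J \<Longrightarrow> i \<noteq> j \<Longrightarrow> indep_var borel (Y i) borel (Y j)"
    and distr: "\<And>j. j \<in> J \<Longrightarrow> distr M borel (Y j) = distr M borel Z"
    and Z: "random_variable borel Z" and Z2: "integrable M (\<lambda>\<omega>. (Z \<omega>)\<^sup>2)"
    and ij: "i \<in> J" "j \<in> J"
  defines "m \<equiv> expectation Z"
  shows "integrable M (\<lambda>\<omega>. (Y i \<omega> - m) * (Y j \<omega> - m))"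
    and "expectation (\<lambda>\<omega>. (Y i \<omega> - m) * (Y j \<omega> - m)) = (if i = j then variance Z else 0)"
proof -
  have Zint: "integrable M Z"
    by (rule square_integrable_imp_integrable[OF Z Z2])
  have transfer: "integrable M (\<lambda>\<omega>. h (Y k \<omega>)) \<longleftrightarrow> integrable M (\<lambda>\<omega>. h (Z \<omega>))"
      "expectation (\<lambda>\<omega>. h (Y k \<omega>)) = expectation (\<lambda>\<omega>. h (Z \<omega>))"
    if "k \<in> J" "h \<in> borel_measurable borel" for k and h :: "real \<Rightarrow> real"
    using same_distr_integrable_iff[OF distr[OF that(1)] rv[OF that(1)] Z that(2)]
      same_distr_integral_eq[OF distr[OF that(1)] rv[OF that(1)] Z that(2)] by auto
  have "integrable M (\<lambda>\<omega>. (Y i \<omega> - m) * (Y j \<omega> - m)) \<and>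
      expectation (\<lambda>\<omega>. (Y i \<omega> - m) * (Y j \<omega> - m)) = (if i = j then variance Z else 0)"
  proof (cases "i = j")
    case True
    have "integrable M (\<lambda>\<omega>. (Z \<omega> - m)\<^sup>2)"
      using Zint Z2 by (simp add: power2_diff)
    then show ?thesis
      using True transfer[OF ij(1), of "\<lambda>x. (x - m)\<^sup>2"] by (simp add: power2_eq_square m_def)
  next
    case False
    have centered: "integrable M (\<lambda>\<omega>. Y k \<omega> - m)" "expectation (\<lambda>\<omega>. Y k \<omega> - m) = 0" if "k \<in> J" for k
      using transfer[OF that, of "\<lambda>x. x - m"] Zint by (simp_all add: m_def prob_space)
    have "indep_var borel ((\<lambda>x. x - m) \<circ> Y i) borel ((\<lambda>x. x - m) \<circ> Y j)"
      using indep[OF ij False] by (intro indep_var_compose) auto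
    then have ind: "indep_var borel (\<lambda>\<omega>. Y i \<omega> - m) borel (\<lambda>\<omega>. Y j \<omega> - m)"
      by (simp add: comp_def)
    show ?thesis
      using indep_var_lebesgue_integral[OF ind] indep_var_integrable[OF ind] centered ij False
      by simp
  qed
  then show "integrable M (\<lambda>\<omega>. (Y i \<omega> - m) * (Y j \<omega> - m))"
    and "expectation (\<lambda>\<omega>. (Y i \<omega> - m) * (Y j \<omega> - m)) = (if i = j then variance Z else 0)"
    by auto
qed

lemma (in prob_space) second_moment_sum_pairwise_indep:
  fixes Y :: "'i \<Rightarrow> 'a \<Rightarrow> real" and Z :: "'a \<Rightarrow> real"
  assumes J: "finite J"
    and rv: "\<And>j. j \<in> J \<Longrightarrow> random_variable borel (Y j)"
    and indep: "\<And>i j. i \<in> J \<Longrightarrow> j \<in> J \<Longrightarrow> i \<noteq> j \<Longrightarrow> indep_var borel (Y i) borel (Y j)"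
    and distr: "\<And>j. j \<in> J \<Longrightarrow> distr M borel (Y j) = distr M borel Z"
    and Z: "random_variable borel Z" and Z2: "integrable M (\<lambda>\<omega>. (Z \<omega>)\<^sup>2)"
  defines "m \<equiv> expectation Z"
  shows "integrable M (\<lambda>\<omega>. (\<Sum>j\<in>J. Y j \<omega> - m)\<^sup>2)"
    and "expectation (\<lambda>\<omega>. (\<Sum>j\<in>J. Y j \<omega> - m)\<^sup>2) = real (card J) * variance Z"
proof -
  have product_int: "integrable M (\<lambda>\<omega>. (Y i \<omega> - m) * (Y j \<omega> - m))" if "i \<in> J" "j \<in> J" for i j
    unfolding m_def using rv indep distr Z Z2 that by (rule centered_products_pairwise_indep(1))
  have product_E: "expectation (\<lambda>\<omega>. (Y i \<omega> - m) * (Y j \<omega> - m)) = (if i = j then variance Z else 0)"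
    if "i \<in> J" "j \<in> J" for i j
    unfolding m_def using rv indep distr Z Z2 that by (rule centered_products_pairwise_indep(2))
  have square: "(\<lambda>\<omega>. (\<Sum>j\<in>J. Y j \<omega> - m)\<^sup>2) = (\<lambda>\<omega>. \<Sum>i\<in>J. \<Sum>j\<in>J. (Y i \<omega> - m) * (Y j \<omega> - m))"
    by (auto simp: power2_eq_square sum_product)
  show "integrable M (\<lambda>\<omega>. (\<Sum>j\<in>J. Y j \<omega> - m)\<^sup>2)"
    unfolding square by (auto intro!: integrable_sum product_int)
  have "expectation (\<lambda>\<omega>. (\<Sum>j\<in>J. Y j \<omega> - m)\<^sup>2)
      = (\<Sum>i\<in>J. \<Sum>j\<in>J. expectation (\<lambda>\<omega>. (Y i \<omega> - m) * (Y j \<omega> - m)))"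
    unfolding square by (simp add: integral_sum integrable_sum product_int)
  also have "\<dots> = (\<Sum>i\<in>J. \<Sum>j\<in>J. if i = j then variance Z else 0)"
    by (intro sum.cong refl product_E)
  also have "\<dots> = real (card J) * variance Z"
    using J by simp
  finally show "expectation (\<lambda>\<omega>. (\<Sum>j\<in>J. Y j \<omega> - m)\<^sup>2) = real (card J) * variance Z" .
qed

lemma (in prob_space) Chebyshev_sum_pairwise_indep:
  fixes Y :: "'i \<Rightarrow> 'a \<Rightarrow> real" and Z :: "'a \<Rightarrow> real"
  assumes J: "finite J"
    and rv: "\<And>j. j \<in> J \<Longrightarrow> random_variable borel (Y j)"
    and indep: "\<And>i j. i \<in> J \<Longrightarrow> j \<in> J \<Longrightarrow> i \<noteq> j \<Longrightarrow> indep_var borel (Y i) borel (Y j)"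
    and distr: "\<And>j. j \<in> J \<Longrightarrow> distr M borel (Y j) = distr M borel Z"
    and Z: "random_variable borel Z" and Z2: "integrable M (\<lambda>\<omega>. (Z \<omega>)\<^sup>2)"
    and \<epsilon>: "\<epsilon> > 0"
  shows "prob {\<omega> \<in> space M. \<epsilon> \<le> \<bar>(\<Sum>j\<in>J. Y j \<omega>) - real (card J) * expectation Z\<bar>}
    \<le> real (card J) * variance Z / \<epsilon>\<^sup>2"
proof -
  note moments = second_moment_sum_pairwise_indep[OF J rv indep distr Z Z2]
  have "random_variable borel (\<lambda>\<omega>. \<Sum>j\<in>J. Y j \<omega> - expectation Z)"
    using rv by measurable
  from second_moment_method[OF this moments(1) \<epsilon>] moments(2)
  show ?thesis
    by (simp add: sum_subtractf)
qed

lemma nn_integral_truncation_gt: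
  fixes f :: "'a \<Rightarrow> real"
  assumes f[measurable]: "f \<in> borel_measurable M" and r: "r < (\<integral>\<^sup>+\<omega>. ennreal (f \<omega>) \<partial>M)"
  shows "\<exists>a\<ge>0. r < (\<integral>\<^sup>+\<omega>. ennreal (min (f \<omega>) a) \<partial>M)"
proof -
  define g where "g k \<omega> = ennreal (min (f \<omega>) (real k))" for k \<omega>
  have inc: "incseq g"
    unfolding g_def incseq_def le_fun_def by (auto intro!: ennreal_leI)
  have sup: "(SUP k. g k \<omega>) = ennreal (f \<omega>)" for \<omega>
  proof (rule antisym)
    show "(SUP k. g k \<omega>) \<le> ennreal (f \<omega>)"
      by (intro SUP_least) (auto simp: g_def intro!: ennreal_leI)
    have "g (nat \<lceil>f \<omega>\<rceil>) \<omega> = ennreal (f \<omega>)"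
      unfolding g_def by (intro arg_cong[where f = ennreal]) linarith
    then show "ennreal (f \<omega>) \<le> (SUP k. g k \<omega>)" by (metis SUP_upper UNIV_I)
  qed
  have "(\<integral>\<^sup>+\<omega>. ennreal (f \<omega>) \<partial>M) = (\<integral>\<^sup>+\<omega>. (SUP k. g k \<omega>) \<partial>M)"
    by (simp add: sup)
  also have "\<dots> = (SUP k. \<integral>\<^sup>+\<omega>. g k \<omega> \<partial>M)"
    by (rule nn_integral_monotone_convergence_SUP[OF inc]) (unfold g_def, measurable)
  finally have "(SUP k. \<integral>\<^sup>+\<omega>. g k \<omega> \<partial>M) = (\<integral>\<^sup>+\<omega>. ennreal (f \<omega>) \<partial>M)" ..
  with r obtain k where "r < (\<integral>\<^sup>+\<omega>. g k \<omega> \<partial>M)"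
    by (metis less_SUP_iff)
  then show ?thesis
    unfolding g_def by (intro exI[of _ "real k"]) auto
qed

text \<open>As in the independence hypothesis, \<open>Inl (n, k)\<close>, \<open>Inr (Inl (n, k))\<close> and \<open>Inr (Inr (n, k))\<close>
  index \<open>D\<^sub>n\<^sup>k\<close>, \<open>X\<^sub>n\<^sup>k\<close> and \<open>R\<^sub>n\<^sup>k\<close>. Functions of a sample \<open>v :: coord \<Rightarrow> real\<close> of some coordinates
  are used to transport the independence of disjoint coordinate sets to the process.\<close>

type_synonym coord = "(nat \<times> nat) + (nat \<times> nat) + (nat \<times> nat)"

definition coords :: "coord set" where
  "coords = Inl ` {(n, k). k \<ge> 1} \<union> Inr ` Inl ` {(n, k). k \<ge> 1} \<union> Inr ` Inr ` {(n, k). k \<ge> 1}"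

definition coord_row :: "coord \<Rightarrow> nat" where
  "coord_row i = (case i of Inl (n, _) \<Rightarrow> n | Inr (Inl (n, _)) \<Rightarrow> n | Inr (Inr (n, _)) \<Rightarrow> n)"

definition coords_before :: "nat \<Rightarrow> coord set" where
  "coords_before n = {i \<in> coords. coord_row i < n}"

definition coords_row :: "nat \<Rightarrow> coord set" where
  "coords_row n = {i \<in> coords. coord_row i = n}"

lemma coords_before_row_disjoint: "coords_before n \<inter> coords_row n = {}"
  by (auto simp: coords_before_def coords_row_def)

definition D_at :: "nat \<Rightarrow> nat \<Rightarrow> (coord \<Rightarrow> real) \<Rightarrow> nat" where
  "D_at n k v = nat \<lfloor>v (Inl (n, k))\<rfloor>"

definition X_at :: "nat \<Rightarrow> nat \<Rightarrow> (coord \<Rightarrow> real) \<Rightarrow> real" where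
  "X_at n k v = v (Inr (Inl (n, k)))"

definition R_at :: "nat \<Rightarrow> nat \<Rightarrow> (coord \<Rightarrow> real) \<Rightarrow> real" where
  "R_at n k v = v (Inr (Inr (n, k)))"

lemma measurable_coordinate: "(\<lambda>v. v i) \<in> borel_measurable (PiM A (\<lambda>_. borel :: real measure))"
proof (cases "i \<in> A")
  case False
  have "(\<lambda>v. undefined :: real) \<in> borel_measurable (PiM A (\<lambda>_. borel :: real measure))" by simp
  then show ?thesis
    by (rule measurable_cong[THEN iffD1, rotated])
      (use False in \<open>auto simp: space_PiM PiE_def extensional_def\<close>)
qed (rule measurable_component_singleton)

lemma measurable_D_at [measurable]: "D_at n k \<in> measurable (PiM A (\<lambda>_. borel)) (count_space UNIV)"
  unfolding D_at_def using measurable_coordinate[of "Inl (n, k)" A] by measurable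

lemma measurable_X_at [measurable]: "X_at n k \<in> borel_measurable (PiM A (\<lambda>_. borel))"
  unfolding X_at_def by (rule measurable_coordinate)

lemma measurable_R_at [measurable]: "R_at n k \<in> borel_measurable (PiM A (\<lambda>_. borel))"
  unfolding R_at_def by (rule measurable_coordinate)

locale fcfs_model = prob_space M for M :: "'a measure" +
  fixes D :: "nat \<Rightarrow> nat \<Rightarrow> 'a \<Rightarrow> nat"
    and X R :: "nat \<Rightarrow> nat \<Rightarrow> 'a \<Rightarrow> real"
  assumes D_meas [measurable]: "\<And>n k. D n k \<in> measurable M (count_space UNIV)"
    and X_meas [measurable]: "\<And>n k. X n k \<in> borel_measurable M"
    and R_meas [measurable]: "\<And>n k. R n k \<in> borel_measurable M"
    and indep: "indep_vars (\<lambda>_. borel)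
         (\<lambda>i \<omega>. case i of Inl (n, k) \<Rightarrow> real (D n k \<omega>)
                       | Inr (Inl (n, k)) \<Rightarrow> X n k \<omega>
                       | Inr (Inr (n, k)) \<Rightarrow> R n k \<omega>)
         (Inl ` {(n, k). k \<ge> 1} \<union> Inr ` Inl ` {(n, k). k \<ge> 1} \<union> Inr ` Inr ` {(n, k). k \<ge> 1})"
    and D_id: "\<And>n k. k \<ge> 1 \<Longrightarrow> distr M (count_space UNIV) (D n k) = distr M (count_space UNIV) (D 0 1)"
    and X_id: "\<And>n k. k \<ge> 1 \<Longrightarrow> distr M borel (X n k) = distr M borel (X 0 1)"
    and R_id: "\<And>n k. k \<ge> 1 \<Longrightarrow> distr M borel (R n k) = distr M borel (R 0 1)"
    and X_nonneg: "\<And>n k \<omega>. \<omega> \<in> space M \<Longrightarrow> X n k \<omega> \<ge> 0"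
    and R_nonneg: "\<And>n k \<omega>. \<omega> \<in> space M \<Longrightarrow> R n k \<omega> \<ge> 0"
    and D_sq: "integrable M (\<lambda>\<omega>. (real (D 0 1 \<omega>))\<^sup>2)"
    and X_sq: "integrable M (\<lambda>\<omega>. (X 0 1 \<omega>)\<^sup>2)"
    and R_sq: "integrable M (\<lambda>\<omega>. (R 0 1 \<omega>)\<^sup>2)"

begin

abbreviation U :: "nat \<Rightarrow> nat \<Rightarrow> 'a \<Rightarrow> nat" where
  "U L n \<omega> \<equiv> fcfs_proc D X R L n \<omega>"

abbreviation offspring :: "nat \<Rightarrow> nat \<Rightarrow> 'a \<Rightarrow> nat" where
  "offspring n u \<omega> \<equiv> fcfs_step D X R n u \<omega>"

definition extinct :: "nat \<Rightarrow> 'a set" where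
  "extinct L = {\<omega> \<in> space M. (\<lambda>n. U L n \<omega>) \<longlonglongrightarrow> 0}"

definition coord_var :: "coord \<Rightarrow> 'a \<Rightarrow> real" where
  "coord_var i \<omega> = (case i of Inl (n, k) \<Rightarrow> real (D n k \<omega>)
                       | Inr (Inl (n, k)) \<Rightarrow> X n k \<omega>
                       | Inr (Inr (n, k)) \<Rightarrow> R n k \<omega>)"

definition sample :: "coord set \<Rightarrow> 'a \<Rightarrow> coord \<Rightarrow> real" where
  "sample A \<omega> = restrict (\<lambda>i. coord_var i \<omega>) A"

lemma coord_var_simps [simp]:
  "coord_var (Inl (n, k)) = (\<lambda>\<omega>. real (D n k \<omega>))"
  "coord_var (Inr (Inl (n, k))) = X n k"
  "coord_var (Inr (Inr (n, k))) = R n k"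
  by (simp_all add: coord_var_def[abs_def])

lemma indep_coord_var: "indep_vars (\<lambda>_. borel) coord_var coords"
  using indep unfolding coord_var_def[abs_def] coords_def .

lemma measurable_coord_var [measurable]: "coord_var i \<in> borel_measurable M"
proof -
  obtain n k where "i = Inl (n, k) \<or> i = Inr (Inl (n, k)) \<or> i = Inr (Inr (n, k))"
    by (metis sum.exhaust surj_pair)
  then show ?thesis by (auto simp: coord_var_def[abs_def])
qed

lemma measurable_sample [measurable]: "sample A \<in> measurable M (PiM A (\<lambda>_. borel))"
  unfolding sample_def by (intro measurable_restrict) simp

lemma indep_sample:
  assumes "A \<inter> B = {}" "A \<subseteq> coords" "B \<subseteq> coords"
  shows "indep_var (PiM A (\<lambda>_. borel)) (sample A) (PiM B (\<lambda>_. borel)) (sample B)"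
  unfolding sample_def[abs_def] by (rule indep_var_restrict[OF indep_coord_var assms])

lemma D_at_sample: "Inl (n, k) \<in> A \<Longrightarrow> D_at n k (sample A \<omega>) = D n k \<omega>"
  by (simp add: D_at_def sample_def coord_var_def)

lemma X_at_sample: "Inr (Inl (n, k)) \<in> A \<Longrightarrow> X_at n k (sample A \<omega>) = X n k \<omega>"
  by (simp add: X_at_def sample_def coord_var_def)

lemma R_at_sample: "Inr (Inr (n, k)) \<in> A \<Longrightarrow> R_at n k (sample A \<omega>) = R n k \<omega>"
  by (simp add: R_at_def sample_def coord_var_def)

lemma U_sample:
  assumes "coords_before n \<subseteq> A"
  shows "U L n \<omega> = fcfs_proc D_at X_at R_at L n (sample A \<omega>)"
proof (rule fcfs_proc_cong)
  fix a b :: nat assume "a < n" "1 \<le> b"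
  then have "Inl (a, b) \<in> A" "Inr (Inl (a, b)) \<in> A" "Inr (Inr (a, b)) \<in> A"
    using assms by (auto simp: coords_before_def coords_def coord_row_def)
  then show "D a b \<omega> = D_at a b (sample A \<omega>) \<and> X a b \<omega> = X_at a b (sample A \<omega>)
      \<and> R a b \<omega> = R_at a b (sample A \<omega>)"
    by (simp add: D_at_sample X_at_sample R_at_sample)
qed

lemma offspring_sample:
  assumes "coords_row n \<subseteq> A"
  shows "offspring n u \<omega> = fcfs_step D_at X_at R_at n u (sample A \<omega>)"
proof -
  have row: "Inl (n, b) \<in> A" "Inr (Inl (n, b)) \<in> A" "Inr (Inr (n, b)) \<in> A" if "b \<ge> 1" for b
    using assms that by (auto simp: coords_row_def coords_def coord_row_def)
  have "(\<Sum>j=1..u. D n j \<omega>) = (\<Sum>j=1..u. D_at n j (sample A \<omega>))"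
    "(\<Sum>j=1..u. R n j \<omega>) = (\<Sum>j=1..u. R_at n j (sample A \<omega>))"
    using row by (auto intro!: sum.cong simp: D_at_sample R_at_sample)
  then show ?thesis
    unfolding fcfs_step_def by (auto intro!: fcfs_count_cong simp: row X_at_sample)
qed

lemma extinct_eq: "extinct L = (\<Union>n. {\<omega> \<in> space M. U L n \<omega> = 0})"
  by (auto simp: extinct_def fcfs_proc_tendsto_0_iff)

lemma extinct_sets [measurable]: "extinct L \<in> events"
  unfolding extinct_eq by measurable

text \<open>The Markov property: \<open>U\<^sub>n\<close> depends only on the rows before \<open>n\<close> and the step from \<open>U\<^sub>n\<close>
  only on row \<open>n\<close>.\<close>

lemma nn_integral_markov:
  fixes \<psi> :: "nat \<Rightarrow> ennreal" and \<phi> :: "nat \<Rightarrow> nat \<Rightarrow> ennreal"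
  assumes "n0 \<le> n"
  shows "(\<integral>\<^sup>+\<omega>. \<psi> (U L n0 \<omega>) * \<phi> (U L n \<omega>) (U L (Suc n) \<omega>) \<partial>M)
       = (\<integral>\<^sup>+\<omega>. \<psi> (U L n0 \<omega>) * (\<integral>\<^sup>+\<omega>'. \<phi> (U L n \<omega>) (offspring n (U L n \<omega>) \<omega>') \<partial>M) \<partial>M)"
proof -
  let ?A = "coords_before n" and ?B = "coords_row n"
  let ?P = "PiM ?A (\<lambda>_. borel) \<Otimes>\<^sub>M PiM ?B (\<lambda>_. borel) :: ((coord \<Rightarrow> real) \<times> (coord \<Rightarrow> real)) measure"
  let ?U = "\<lambda>m v. fcfs_proc D_at X_at R_at L m v"
  define h where "h p = \<psi> (?U n0 (fst p)) * \<phi> (?U n (fst p)) (fcfs_step D_at X_at R_at n (?U n (fst p)) (snd p))"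
    for p
  have "(\<lambda>p. \<phi> i (fcfs_step D_at X_at R_at n i (snd p))) \<in> borel_measurable ?P" for i
    by measurable
  from measurable_compose_countable[where f = "\<lambda>i p. \<phi> i (fcfs_step D_at X_at R_at n i (snd p))",
      OF this, of "\<lambda>p. ?U n (fst p)"]
  have h_meas: "h \<in> borel_measurable ?P"
    unfolding h_def by measurable
  have "coords_before n0 \<subseteq> ?A"
    using assms by (auto simp: coords_before_def)
  then have h_eq: "\<psi> (U L n0 \<omega>) * \<phi> (U L n \<omega>) (offspring n (U L n \<omega>) \<omega>')
      = h (sample ?A \<omega>, sample ?B \<omega>')" for \<omega> \<omega>'
    unfolding h_def by (simp add: U_sample[of _ ?A] offspring_sample[of n ?B])
  have ind: "indep_var (PiM ?A (\<lambda>_. borel)) (sample ?A) (PiM ?B (\<lambda>_. borel)) (sample ?B)"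
    by (intro indep_sample coords_before_row_disjoint) (auto simp: coords_before_def coords_row_def)
  have "(\<integral>\<^sup>+\<omega>. \<psi> (U L n0 \<omega>) * \<phi> (U L n \<omega>) (U L (Suc n) \<omega>) \<partial>M)
      = (\<integral>\<^sup>+\<omega>. h (sample ?A \<omega>, sample ?B \<omega>) \<partial>M)"
    by (simp only: fcfs_proc_Suc h_eq)
  also have "\<dots> = (\<integral>\<^sup>+\<omega>. (\<integral>\<^sup>+\<omega>'. h (sample ?A \<omega>, sample ?B \<omega>') \<partial>M) \<partial>M)"
    by (rule indep_var_nn_integral[OF ind h_meas])
  finally show ?thesis
    by (simp add: h_eq[symmetric] nn_integral_cmult)
qed

abbreviation "mD \<equiv> expectation (\<lambda>\<omega>. real (D 0 1 \<omega>))"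

abbreviation "mX \<equiv> expectation (X 0 1)"

abbreviation "mR \<equiv> expectation (R 0 1)"

lemma X_integrable: "integrable M (X 0 1)"
  by (rule square_integrable_imp_integrable[OF X_meas X_sq])

lemma R_integrable: "integrable M (R 0 1)"
  by (rule square_integrable_imp_integrable[OF R_meas R_sq])

lemma mR_nonneg: "mR \<ge> 0"
  using R_nonneg by (intro integral_nonneg_AE) auto

lemma D_real_id:
  "k \<ge> 1 \<Longrightarrow> distr M borel (\<lambda>\<omega>. real (D n k \<omega>)) = distr M borel (\<lambda>\<omega>. real (D 0 1 \<omega>))"
  using distr_distr[of real "count_space UNIV" borel "D n k" M]
    distr_distr[of real "count_space UNIV" borel "D 0 1" M] D_id[of k n]
  by (simp add: comp_def)

lemma prob_D_eq: "k \<ge> 1 \<Longrightarrow> prob {\<omega> \<in> space M. D n k \<omega> = j} = prob {\<omega> \<in> space M. D 0 1 \<omega> = j}"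
  using arg_cong[OF D_id[of k n], of "\<lambda>N. measure N {j}"]
  by (simp add: measure_distr vimage_def Int_def conj_commute)

lemma nn_integral_R: "k \<ge> 1 \<Longrightarrow> (\<integral>\<^sup>+\<omega>. ennreal (R n k \<omega>) \<partial>M) = ennreal mR"
  using same_distr_nn_integral_eq[OF R_id, of k n ennreal] R_integrable R_nonneg
  by (simp add: nn_integral_eq_integral)

lemma prob_sum_deviation:
  assumes J: "finite J" "inj_on \<iota> J" "\<iota> ` J \<subseteq> coords"
    and "\<And>j. j \<in> J \<Longrightarrow> distr M borel (coord_var (\<iota> j)) = distr M borel Z"
    and "random_variable borel Z" "integrable M (\<lambda>\<omega>. (Z \<omega>)\<^sup>2)" "\<epsilon> > 0"
  shows "prob {\<omega> \<in> space M. \<epsilon> \<le> \<bar>(\<Sum>j\<in>J. coord_var (\<iota> j) \<omega>) - real (card J) * expectation Z\<bar>}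
    \<le> real (card J) * variance Z / \<epsilon>\<^sup>2"
proof (rule Chebyshev_sum_pairwise_indep)
  fix i j assume "i \<in> J" "j \<in> J" "i \<noteq> j"
  then show "indep_var borel (coord_var (\<iota> i)) borel (coord_var (\<iota> j))"
    using J by (intro indep_vars_imp_indep_var[OF indep_coord_var]) (auto dest: inj_onD)
qed (use assms in simp_all)

lemma prob_D_sum_deviation:
  assumes "\<epsilon> > 0"
  shows "prob {\<omega> \<in> space M. \<epsilon> \<le> \<bar>(\<Sum>j=1..u. real (D n j \<omega>)) - real u * mD\<bar>}
    \<le> real u * variance (\<lambda>\<omega>. real (D 0 1 \<omega>)) / \<epsilon>\<^sup>2"
proof -
  have "prob {\<omega> \<in> space M. \<epsilon> \<le> \<bar>(\<Sum>j\<in>{1..u}. coord_var (Inl (n, j)) \<omega>) - real (card {1..u}) * mD\<bar>}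
    \<le> real (card {1..u}) * variance (\<lambda>\<omega>. real (D 0 1 \<omega>)) / \<epsilon>\<^sup>2"
  proof (rule prob_sum_deviation)
    show "distr M borel (coord_var (Inl (n, j))) = distr M borel (\<lambda>\<omega>. real (D 0 1 \<omega>))" if "j \<in> {1..u}" for j
      unfolding coord_var_simps by (rule D_real_id) (use that in simp)
  qed (use assms D_sq in \<open>auto simp: inj_on_def coords_def\<close>)
  then show ?thesis by simp
qed

lemma prob_X_sum_deviation:
  assumes "\<epsilon> > 0"
  shows "prob {\<omega> \<in> space M. \<epsilon> \<le> \<bar>(\<Sum>j=1..u. X n j \<omega>) - real u * mX\<bar>}
    \<le> real u * variance (X 0 1) / \<epsilon>\<^sup>2"
proof -
  have "prob {\<omega> \<in> space M. \<epsilon> \<le> \<bar>(\<Sum>j\<in>{1..u}. coord_var (Inr (Inl (n, j))) \<omega>) - real (card {1..u}) * mX\<bar>}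
    \<le> real (card {1..u}) * variance (X 0 1) / \<epsilon>\<^sup>2"
  proof (rule prob_sum_deviation)
    show "distr M borel (coord_var (Inr (Inl (n, j)))) = distr M borel (X 0 1)" if "j \<in> {1..u}" for j
      unfolding coord_var_simps by (rule X_id) (use that in simp)
  qed (use assms X_sq in \<open>auto simp: inj_on_def coords_def\<close>)
  then show ?thesis by simp
qed

lemma prob_R_sum_deviation:
  assumes "\<epsilon> > 0"
  shows "prob {\<omega> \<in> space M. \<epsilon> \<le> \<bar>(\<Sum>j=1..u. R n j \<omega>) - real u * mR\<bar>}
    \<le> real u * variance (R 0 1) / \<epsilon>\<^sup>2"
proof -
  have "prob {\<omega> \<in> space M. \<epsilon> \<le> \<bar>(\<Sum>j\<in>{1..u}. coord_var (Inr (Inr (n, j))) \<omega>) - real (card {1..u}) * mR\<bar>}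
    \<le> real (card {1..u}) * variance (R 0 1) / \<epsilon>\<^sup>2"
  proof (rule prob_sum_deviation)
    show "distr M borel (coord_var (Inr (Inr (n, j)))) = distr M borel (R 0 1)" if "j \<in> {1..u}" for j
      unfolding coord_var_simps by (rule R_id) (use that in simp)
  qed (use assms R_sq in \<open>auto simp: inj_on_def coords_def\<close>)
  then show ?thesis by simp
qed

subsection \<open>Survival when \<open>r > \<mu>\<close>\<close>

lemma offspring_small_imp_deviation:
  assumes c: "0 < c" "c < mD" "c * mX < \<beta>" "\<beta> < mR" and mX: "0 \<le> mX"
    and u: "2 * mX \<le> (\<beta> - c * mX) * real u"
    and \<omega>: "\<omega> \<in> space M" "real (offspring n u \<omega>) < c * real u"
  defines "k \<equiv> nat \<lceil>c * real u\<rceil>"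
  shows "(mD - c) * real u \<le> \<bar>(\<Sum>j=1..u. real (D n j \<omega>)) - real u * mD\<bar>
    \<or> (mR - \<beta>) * real u \<le> \<bar>(\<Sum>j=1..u. R n j \<omega>) - real u * mR\<bar>
    \<or> (\<beta> - c * mX) * real u / 2 \<le> \<bar>(\<Sum>j=1..k. X n j \<omega>) - real k * mX\<bar>"
proof (rule ccontr)
  assume "\<not> ?thesis"
  then have D_sum: "\<bar>(\<Sum>j=1..u. real (D n j \<omega>)) - real u * mD\<bar> < (mD - c) * real u"
    and R_sum: "\<bar>(\<Sum>j=1..u. R n j \<omega>) - real u * mR\<bar> < (mR - \<beta>) * real u"
    and X_sum: "\<bar>(\<Sum>j=1..k. X n j \<omega>) - real k * mX\<bar> < (\<beta> - c * mX) * real u / 2"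
    by auto
  have "0 < c * real u" using \<omega>(2) by linarith
  then have k: "c * real u \<le> real k" "real k \<le> c * real u + 1" "1 \<le> k"
    unfolding k_def by linarith+
  have "c * real u \<le> real (\<Sum>j=1..u. D n j \<omega>)"
    using D_sum by (simp add: abs_less_iff algebra_simps)
  then have "k \<le> (\<Sum>j=1..u. D n j \<omega>)"
    unfolding k_def by (simp add: nat_le_iff ceiling_le_iff)
  moreover have "(\<Sum>j=1..k. X n j \<omega>) \<le> (\<Sum>j=1..u. R n j \<omega>)"
  proof -
    have "real k * mX \<le> (c * real u + 1) * mX"
      using k(2) mX by (intro mult_right_mono) auto
    moreover have "(c * real u + 1) * mX = c * real u * mX + mX"
      "(\<beta> - c * mX) * real u = \<beta> * real u - c * real u * mX"
      by (simp_all add: algebra_simps)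
    ultimately have "real k * mX + (\<beta> - c * mX) * real u / 2 \<le> \<beta> * real u"
      using u by linarith
    moreover have "(\<Sum>j=1..k. X n j \<omega>) < real k * mX + (\<beta> - c * mX) * real u / 2"
      using X_sum by (simp only: abs_less_iff) linarith
    moreover have "\<beta> * real u < (\<Sum>j=1..u. R n j \<omega>)"
      using R_sum by (simp add: abs_less_iff algebra_simps)
    ultimately show ?thesis by linarith
  qed
  ultimately have "k \<le> offspring n u \<omega>"
    unfolding fcfs_step_def using k(3) X_nonneg[OF \<omega>(1)] by (intro fcfs_count_ge) auto
  then show False using k(1) \<omega>(2) by linarith
qed

lemma prob_offspring_lt_le:
  assumes c: "1 < c" "c < mD" "c * mX < \<beta>" "\<beta> < mR" and mX: "0 < mX"
    and u: "2 * mX \<le> (\<beta> - c * mX) * real u"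
  defines "vD \<equiv> variance (\<lambda>\<omega>. real (D 0 1 \<omega>))" and "vX \<equiv> variance (X 0 1)" and "vR \<equiv> variance (R 0 1)"
  shows "prob {\<omega> \<in> space M. real (offspring n u \<omega>) < c * real u}
    \<le> (vD / (mD - c)\<^sup>2 + vR / (mR - \<beta>)\<^sup>2 + 4 * (c + 1) * vX / (\<beta> - c * mX)\<^sup>2) / real u"
proof -
  define \<delta> where "\<delta> = \<beta> - c * mX"
  define k where "k = nat \<lceil>c * real u\<rceil>"
  have \<delta>: "\<delta> > 0" and "real u > 0"
    using c mX u by (auto simp: \<delta>_def intro!: gr0I)
  then have k: "real k \<le> (c + 1) * real u"
    unfolding k_def using c by (simp add: algebra_simps) linarith
  define E1 where "E1 = {\<omega> \<in> space M. (mD - c) * real u \<le> \<bar>(\<Sum>j=1..u. real (D n j \<omega>)) - real u * mD\<bar>}"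
  define E2 where "E2 = {\<omega> \<in> space M. (mR - \<beta>) * real u \<le> \<bar>(\<Sum>j=1..u. R n j \<omega>) - real u * mR\<bar>}"
  define E3 where "E3 = {\<omega> \<in> space M. \<delta> * real u / 2 \<le> \<bar>(\<Sum>j=1..k. X n j \<omega>) - real k * mX\<bar>}"
  have events: "E1 \<in> events" "E2 \<in> events" "E3 \<in> events"
    unfolding E1_def E2_def E3_def by measurable
  have "{\<omega> \<in> space M. real (offspring n u \<omega>) < c * real u} \<subseteq> E1 \<union> E2 \<union> E3"
    using offspring_small_imp_deviation[of c \<beta> u _ n] c mX u
    unfolding E1_def E2_def E3_def k_def \<delta>_def by (auto simp: mult.commute)
  then have "prob {\<omega> \<in> space M. real (offspring n u \<omega>) < c * real u} \<le> prob (E1 \<union> E2 \<union> E3)"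
    using events by (intro finite_measure_mono) auto
  also have "\<dots> \<le> prob E1 + prob E2 + prob E3"
    using events measure_Un_le[of "E1 \<union> E2" M E3] measure_Un_le[of E1 M E2] by auto
  also have "prob E1 \<le> real u * vD / ((mD - c) * real u)\<^sup>2"
    unfolding E1_def vD_def using c \<open>real u > 0\<close> by (intro prob_D_sum_deviation) simp
  also have "\<dots> = vD / (mD - c)\<^sup>2 / real u"
    using \<open>real u > 0\<close> by (simp add: power2_eq_square)
  also have "prob E2 \<le> real u * vR / ((mR - \<beta>) * real u)\<^sup>2"
    unfolding E2_def vR_def using c \<open>real u > 0\<close> by (intro prob_R_sum_deviation) simp
  also have "\<dots> = vR / (mR - \<beta>)\<^sup>2 / real u"
    using \<open>real u > 0\<close> by (simp add: power2_eq_square)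
  also have "prob E3 \<le> real k * vX / (\<delta> * real u / 2)\<^sup>2"
    unfolding E3_def vX_def using \<delta> \<open>real u > 0\<close> by (intro prob_X_sum_deviation) simp
  also have "\<dots> \<le> (c + 1) * real u * vX / (\<delta> * real u / 2)\<^sup>2"
    using k by (intro divide_right_mono mult_right_mono) (simp_all add: vX_def variance_positive)
  also have "\<dots> = 4 * (c + 1) * vX / \<delta>\<^sup>2 / real u"
    using \<open>real u > 0\<close> \<delta> by (simp add: power2_eq_square field_simps)
  finally show ?thesis
    by (simp add: \<delta>_def add_divide_distrib)
qed

lemma offspring_lower_tail:
  assumes c: "1 < c" "c < mD" "c * mX < \<beta>" "\<beta> < mR" and mX: "0 < mX"
  obtains K where "K \<ge> 0"
    "\<And>n u. u \<ge> 1 \<Longrightarrow> prob {\<omega> \<in> space M. real (offspring n u \<omega>) < c * real u} \<le> K / real u"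
proof
  define \<delta> where "\<delta> = \<beta> - c * mX"
  define K0 where "K0 = variance (\<lambda>\<omega>. real (D 0 1 \<omega>)) / (mD - c)\<^sup>2 + variance (R 0 1) / (mR - \<beta>)\<^sup>2
    + 4 * (c + 1) * variance (X 0 1) / \<delta>\<^sup>2"
  have \<delta>: "\<delta> > 0"
    using c by (simp add: \<delta>_def)
  have "K0 \<ge> 0"
    unfolding K0_def using c
    by (intro add_nonneg_nonneg divide_nonneg_nonneg mult_nonneg_nonneg variance_positive) simp_all
  then show K: "K0 + 2 * mX / \<delta> \<ge> 0"
    using \<delta> mX by simp
  fix n u :: nat assume "u \<ge> 1"
  show "prob {\<omega> \<in> space M. real (offspring n u \<omega>) < c * real u} \<le> (K0 + 2 * mX / \<delta>) / real u"
  proof (cases "2 * mX \<le> \<delta> * real u")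
    case True
    then have "prob {\<omega> \<in> space M. real (offspring n u \<omega>) < c * real u} \<le> K0 / real u"
      using prob_offspring_lt_le[OF c mX, of u n] by (simp add: K0_def \<delta>_def mult.commute)
    also have "\<dots> \<le> (K0 + 2 * mX / \<delta>) / real u"
      using \<delta> mX by (intro divide_right_mono) auto
    finally show ?thesis .
  next
    case False
    then have "1 \<le> 2 * mX / \<delta> / real u"
      using \<open>u \<ge> 1\<close> \<delta> by (simp add: field_simps)
    also have "\<dots> \<le> (K0 + 2 * mX / \<delta>) / real u"
      using \<open>K0 \<ge> 0\<close> by (intro divide_right_mono) auto
    finally show ?thesis
      by (rule order_trans[OF prob_le_1])
  qed
qed

lemma prob_growth_failure_le:
  assumes tail: "\<And>n u. u \<ge> 1 \<Longrightarrow> prob {\<omega> \<in> space M. real (offspring n u \<omega>) < c * real u} \<le> K / real u"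
    and K: "K \<ge> 0" and b: "b \<ge> 1" and "n0 \<le> n"
  shows "prob {\<omega> \<in> space M. U L n0 \<omega> = j \<and> b \<le> real (U L n \<omega>) \<and> real (U L (Suc n) \<omega>) < c * real (U L n \<omega>)}
    \<le> prob {\<omega> \<in> space M. U L n0 \<omega> = j} * (K / b)"
proof -
  define \<psi> :: "nat \<Rightarrow> ennreal" where "\<psi> a = of_bool (a = j)" for a
  define \<phi> :: "nat \<Rightarrow> nat \<Rightarrow> ennreal" where "\<phi> a a' = of_bool (b \<le> real a \<and> real a' < c * real a)" for a a'
  have inner: "(\<integral>\<^sup>+\<omega>'. \<phi> a (offspring n a \<omega>') \<partial>M) \<le> ennreal (K / b)" for a
  proof (cases "b \<le> real a")
    case True
    then have "a \<ge> 1" using b by linarith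
    have "(\<integral>\<^sup>+\<omega>'. \<phi> a (offspring n a \<omega>') \<partial>M) = emeasure M {\<omega>' \<in> space M. real (offspring n a \<omega>') < c * real a}"
      using True by (subst emeasure_Collect_eq_nn_integral) (simp_all add: \<phi>_def)
    also have "\<dots> \<le> ennreal (K / real a)"
      using tail[OF \<open>a \<ge> 1\<close>] by (simp add: emeasure_eq_measure ennreal_leI)
    also have "\<dots> \<le> ennreal (K / b)"
      using True K b by (intro ennreal_leI divide_left_mono) auto
    finally show ?thesis .
  qed (simp add: \<phi>_def)
  have "emeasure M {\<omega> \<in> space M. U L n0 \<omega> = j \<and> b \<le> real (U L n \<omega>) \<and> real (U L (Suc n) \<omega>) < c * real (U L n \<omega>)}
      = (\<integral>\<^sup>+\<omega>. \<psi> (U L n0 \<omega>) * \<phi> (U L n \<omega>) (U L (Suc n) \<omega>) \<partial>M)"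
    by (subst emeasure_Collect_eq_nn_integral) (simp_all add: \<psi>_def \<phi>_def of_bool_conj)
  also have "\<dots> = (\<integral>\<^sup>+\<omega>. \<psi> (U L n0 \<omega>) * (\<integral>\<^sup>+\<omega>'. \<phi> (U L n \<omega>) (offspring n (U L n \<omega>) \<omega>') \<partial>M) \<partial>M)"
    by (rule nn_integral_markov[OF assms(4)])
  also have "\<dots> \<le> (\<integral>\<^sup>+\<omega>. \<psi> (U L n0 \<omega>) * ennreal (K / b) \<partial>M)"
    by (intro nn_integral_mono mult_left_mono inner) simp
  also have "\<dots> = emeasure M {\<omega> \<in> space M. U L n0 \<omega> = j} * ennreal (K / b)"
    by (simp add: nn_integral_multc \<psi>_def emeasure_Collect_eq_nn_integral)
  finally show ?thesis
    using K b by (simp add: emeasure_eq_measure ennreal_mult'[symmetric])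
qed

lemma extinct_imp_growth_failure:
  assumes "1 \<le> c" "1 \<le> j" "\<omega> \<in> extinct L" "U L n0 \<omega> = j"
  shows "\<exists>i. c ^ i * real j \<le> real (U L (n0 + i) \<omega>) \<and> real (U L (Suc (n0 + i)) \<omega>) < c * real (U L (n0 + i) \<omega>)"
proof -
  obtain m where "U L m \<omega> = 0"
    using assms(3) by (auto simp: extinct_def fcfs_proc_tendsto_0_iff)
  then have "U L (n0 + m) \<omega> = 0"
    by (rule fcfs_proc_absorbed) simp
  then show ?thesis
    using exists_growth_failure[of c "\<lambda>i. U L (n0 + i) \<omega>" m] assms by auto
qed

lemma prob_extinct_given_le:
  assumes tail: "\<And>n u. u \<ge> 1 \<Longrightarrow> prob {\<omega> \<in> space M. real (offspring n u \<omega>) < c * real u} \<le> K / real u"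
    and c: "c > 1" and K: "K \<ge> 0" and j: "j \<ge> 1"
  shows "prob ({\<omega> \<in> space M. U L n0 \<omega> = j} \<inter> extinct L)
    \<le> prob {\<omega> \<in> space M. U L n0 \<omega> = j} * (K * c / ((c - 1) * real j))"
proof -
  define P where "P = prob {\<omega> \<in> space M. U L n0 \<omega> = j}"
  define F where "F i = {\<omega> \<in> space M. U L n0 \<omega> = j \<and> c ^ i * real j \<le> real (U L (n0 + i) \<omega>)
      \<and> real (U L (Suc (n0 + i)) \<omega>) < c * real (U L (n0 + i) \<omega>)}" for i
  have "F i \<in> events" for i
    unfolding F_def by measurable
  then have F_events: "range F \<subseteq> events" by auto
  have F_le: "prob (F i) \<le> P * (K / real j) * inverse c ^ i" for i
  proof -
    have "1 * 1 \<le> c ^ i * real j"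
      using c j by (intro mult_mono one_le_power) auto
    then have "prob (F i) \<le> P * (K / (c ^ i * real j))"
      unfolding F_def P_def by (intro prob_growth_failure_le[OF tail K]) auto
    also have "\<dots> = P * (K / real j) * inverse c ^ i"
      using c by (simp add: field_simps)
    finally show ?thesis .
  qed
  have "norm (inverse c) < 1"
    using c by (simp add: inverse_less_1_iff)
  then have geom: "(\<lambda>i. P * (K / real j) * inverse c ^ i) sums (P * (K / real j) * (1 / (1 - inverse c)))"
    by (intro sums_mult geometric_sums)
  have F_summable: "summable (\<lambda>i. prob (F i))"
    using F_le by (intro summable_comparison_test[OF _ sums_summable[OF geom]]) auto
  have "{\<omega> \<in> space M. U L n0 \<omega> = j} \<inter> extinct L \<subseteq> (\<Union>i. F i)"
    using extinct_imp_growth_failure[of c j] c j by (auto simp: F_def extinct_def)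
  then have "prob ({\<omega> \<in> space M. U L n0 \<omega> = j} \<inter> extinct L) \<le> prob (\<Union>i. F i)"
    using F_events by (intro finite_measure_mono) auto
  also have "\<dots> \<le> (\<Sum>i. prob (F i))"
    by (rule finite_measure_subadditive_countably[OF F_events F_summable])
  also have "\<dots> \<le> P * (K / real j) * (1 / (1 - inverse c))"
    by (rule sums_le[OF F_le summable_sums[OF F_summable] geom])
  also have "\<dots> = P * (K * c / ((c - 1) * real j))"
    using c j by (simp add: field_simps)
  finally show ?thesis by (simp add: P_def)
qed

lemma extinct_given_bound:
  assumes "1 < mD" "0 < mX" "mX < mR"
  obtains C where "C \<ge> 0" "\<And>L n0 j. j \<ge> 1 \<Longrightarrow>
    prob ({\<omega> \<in> space M. U L n0 \<omega> = j} \<inter> extinct L) \<le> prob {\<omega> \<in> space M. U L n0 \<omega> = j} * (C / real j)"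
proof -
  define c where "c = min ((1 + mD) / 2) ((mX + mR) / (2 * mX))"
  define \<beta> where "\<beta> = (c * mX + mR) / 2"
  have "1 < (1 + mD) / 2" "1 < (mX + mR) / (2 * mX)"
    using assms by (simp_all add: field_simps)
  moreover have "c \<le> (1 + mD) / 2"
    unfolding c_def by (rule min.cobounded1)
  ultimately have c1: "1 < c" "c < mD"
    using assms(1) by (simp_all add: c_def)
  have "c * mX \<le> (mX + mR) / (2 * mX) * mX"
    using assms(2) unfolding c_def by (intro mult_right_mono min.cobounded2) auto
  also have "\<dots> < mR"
    using assms(2,3) by (simp add: field_simps)
  finally have c: "1 < c" "c < mD" "c * mX < \<beta>" "\<beta> < mR"
    using c1 by (simp_all add: \<beta>_def)
  obtain K where K: "K \<ge> 0"
    "\<And>n u. u \<ge> 1 \<Longrightarrow> prob {\<omega> \<in> space M. real (offspring n u \<omega>) < c * real u} \<le> K / real u"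
    using offspring_lower_tail[OF c assms(2)] by blast
  show ?thesis
  proof (rule that[of "K * c / (c - 1)"])
    show "K * c / (c - 1) \<ge> 0" using K c by simp
    fix L n0 j :: nat assume "j \<ge> 1"
    from prob_extinct_given_le[OF K(2) c(1) K(1) this, of L n0]
    show "prob ({\<omega> \<in> space M. U L n0 \<omega> = j} \<inter> extinct L)
      \<le> prob {\<omega> \<in> space M. U L n0 \<omega> = j} * (K * c / (c - 1) / real j)"
      by (simp add: field_simps)
  qed
qed

lemma prob_extinct_tendsto_0:
  assumes "1 < mD" "0 < mX" "mX < mR"
  shows "(\<lambda>L. prob (extinct L)) \<longlonglongrightarrow> 0"
proof -
  obtain C where C: "C \<ge> 0" "\<And>L n0 j. j \<ge> 1 \<Longrightarrow>
    prob ({\<omega> \<in> space M. U L n0 \<omega> = j} \<inter> extinct L) \<le> prob {\<omega> \<in> space M. U L n0 \<omega> = j} * (C / real j)"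
    using extinct_given_bound[OF assms] by blast
  have bound: "prob (extinct L) \<le> C / real L" if "L \<ge> 1" for L
  proof -
    have "prob (extinct L) \<le> prob (space M) * (C / real L)"
      using C(2)[OF that, of L 0] by (simp add: Int_absorb1 extinct_def)
    then show ?thesis by (simp add: prob_space)
  qed
  show ?thesis
  proof (rule tendsto_sandwich[of "\<lambda>_. 0" _ _ "\<lambda>L. C / real L"])
    show "eventually (\<lambda>L. prob (extinct L) \<le> C / real L) sequentially"
      using bound by (rule eventually_sequentiallyI)
  qed (simp_all add: lim_const_over_n)
qed

lemma prob_extinct_lt_1:
  assumes "1 < mD" "0 < mX" "mX < mR"
    and irred: "\<And>j. j \<ge> 1 \<Longrightarrow> \<exists>n. prob {\<omega> \<in> space M. U 1 n \<omega> = j} > 0"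
  shows "prob (extinct 1) < 1"
proof -
  obtain C where C: "C \<ge> 0" "\<And>L n0 j. j \<ge> 1 \<Longrightarrow>
    prob ({\<omega> \<in> space M. U L n0 \<omega> = j} \<inter> extinct L) \<le> prob {\<omega> \<in> space M. U L n0 \<omega> = j} * (C / real j)"
    using extinct_given_bound[OF assms(1-3)] by blast
  define j where "j = nat \<lceil>2 * C\<rceil> + 1"
  have "2 * C < real j"
    unfolding j_def by linarith
  then have j: "j \<ge> 1" "C / real j < 1 / 2"
    using C(1) by (auto simp: j_def field_simps)
  obtain n where pos: "prob {\<omega> \<in> space M. U 1 n \<omega> = j} > 0"
    using irred[OF j(1)] by blast
  define A where "A = {\<omega> \<in> space M. U 1 n \<omega> = j}"
  have A: "A \<in> events" "prob A > 0"
    unfolding A_def using pos by simp_all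
  have "extinct 1 \<subseteq> space M"
    by (auto simp: extinct_def)
  then have "prob (extinct 1) \<le> prob ((A \<inter> extinct 1) \<union> (space M - A))"
    using A by (intro finite_measure_mono) auto
  also have "\<dots> \<le> prob (A \<inter> extinct 1) + prob (space M - A)"
    using A by (intro measure_Un_le) auto
  also have "prob (A \<inter> extinct 1) \<le> prob A * (C / real j)"
    using C(2)[OF j(1), of 1 n] by (simp add: A_def)
  also have "prob (space M - A) = 1 - prob A"
    using A(1) by (rule prob_compl)
  also have "prob A * (C / real j) < prob A * 1"
    using A(2) j(2) by (intro mult_strict_left_mono) linarith+
  finally show ?thesis by simp
qed

subsection \<open>Extinction when \<open>r < \<mu>\<close>\<close>

abbreviation admitted :: "nat \<Rightarrow> nat \<Rightarrow> real \<Rightarrow> nat \<Rightarrow> 'a \<Rightarrow> bool" where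
  "admitted n u a k \<omega> \<equiv> fcfs_admitted D X R n u a k \<omega>"

lemma offspring_le_admitted:
  assumes "\<omega> \<in> space M" "a \<ge> 0"
  shows "ennreal (real (offspring n u \<omega>)) \<le> (\<Sum>i. of_bool (admitted n u a (Suc i) \<omega>))"
proof -
  define t where "t = (\<Sum>j=1..u. D n j \<omega>)"
  have "offspring n u \<omega> \<le> card {k \<in> {1..t}. (\<Sum>j=1..k-1. min (X n j \<omega>) a) \<le> (\<Sum>j=1..u. R n j \<omega>)}"
    unfolding fcfs_step_def t_def using assms X_nonneg by (intro fcfs_count_le_card) auto
  also have "\<dots> = card {k \<in> {1..t}. admitted n u a k \<omega>}"
    by (auto simp: fcfs_admitted_def t_def intro!: arg_cong[where f = card])
  also have "\<dots> = (\<Sum>k=1..t. of_bool (admitted n u a k \<omega>) :: nat)"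
    by (simp add: sum.inter_filter[symmetric]) (auto intro!: arg_cong[where f = card])
  also have "\<dots> = (\<Sum>i<t. of_bool (admitted n u a (Suc i) \<omega>) :: nat)"
    by (simp add: sum.atLeast1_atMost_eq)
  finally have "ennreal (real (offspring n u \<omega>)) \<le> (\<Sum>i<t. of_bool (admitted n u a (Suc i) \<omega>))"
    by (simp add: ennreal_of_nat_eq_real_of_nat[symmetric] of_nat_sum[symmetric] del: of_nat_sum)
  also have "\<dots> = (\<Sum>i. of_bool (admitted n u a (Suc i) \<omega>))"
    by (rule suminf_finite[symmetric]) (auto simp: fcfs_admitted_def t_def)
  finally show ?thesis .
qed

lemma admitted_truncated_work_le:
  assumes "\<omega> \<in> space M" "a \<ge> 0"
  shows "(\<Sum>i. of_bool (admitted n u a (Suc i) \<omega>) * ennreal (min (X n (Suc i) \<omega>) a))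
    \<le> ennreal ((\<Sum>j=1..u. R n j \<omega>) + a)"
proof -
  define t s y where "t = (\<Sum>j=1..u. D n j \<omega>)" "s = (\<Sum>j=1..u. R n j \<omega>)"
    "y j = min (X n j \<omega>) a" for j
  have y: "0 \<le> y j" "y j \<le> a" for j
    using assms X_nonneg by (auto simp: t_s_y_def)
  have s: "0 \<le> s"
    using assms R_nonneg by (auto simp: t_s_y_def intro!: sum_nonneg)
  have "(\<Sum>i. of_bool (admitted n u a (Suc i) \<omega>) * ennreal (min (X n (Suc i) \<omega>) a))
      = (\<Sum>i<t. of_bool (admitted n u a (Suc i) \<omega>) * ennreal (min (X n (Suc i) \<omega>) a))"
    by (rule suminf_finite) (auto simp: fcfs_admitted_def t_s_y_def)
  also have "\<dots> = (\<Sum>i<t. ennreal (if (\<Sum>j=1..Suc i-1. y j) \<le> s then y (Suc i) else 0))"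
    by (intro sum.cong) (auto simp: fcfs_admitted_def t_s_y_def)
  also have "\<dots> = ennreal (\<Sum>k=1..t. if (\<Sum>j=1..k-1. y j) \<le> s then y k else 0)"
    using y by (simp add: sum.atLeast1_atMost_eq sum_ennreal)
  also have "\<dots> \<le> ennreal (s + a)"
    using y s by (intro ennreal_leI admitted_work_le)
  finally show ?thesis by (simp add: t_s_y_def)
qed

lemma admitted_sample:
  assumes "\<And>j. j \<in> {1..u} \<Longrightarrow> Inl (n, j) \<in> A \<and> Inr (Inr (n, j)) \<in> A"
    and "\<And>j. j \<in> {1..<k} \<Longrightarrow> Inr (Inl (n, j)) \<in> A"
  shows "admitted n u a k \<omega> = fcfs_admitted D_at X_at R_at n u a k (sample A \<omega>)"
proof -
  have "(\<Sum>j=1..u. D n j \<omega>) = (\<Sum>j=1..u. D_at n j (sample A \<omega>))"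
    "(\<Sum>j=1..u. R n j \<omega>) = (\<Sum>j=1..u. R_at n j (sample A \<omega>))"
    "(\<Sum>j=1..k-1. min (X n j \<omega>) a) = (\<Sum>j=1..k-1. min (X_at n j (sample A \<omega>)) a)"
    using assms by (auto intro!: sum.cong simp: D_at_sample R_at_sample X_at_sample)
  then show ?thesis
    by (simp add: fcfs_admitted_def)
qed

lemma nn_integral_admitted_service:
  assumes "k \<ge> 1"
  shows "(\<integral>\<^sup>+\<omega>. of_bool (admitted n u a k \<omega>) * ennreal (min (X n k \<omega>) a) \<partial>M)
    = emeasure M {\<omega> \<in> space M. admitted n u a k \<omega>} * (\<integral>\<^sup>+\<omega>. ennreal (min (X 0 1 \<omega>) a) \<partial>M)"
proof -
  define A where "A = (\<lambda>j. Inl (n, j)) ` {1..u} \<union> (\<lambda>j. Inr (Inr (n, j))) ` {1..u}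
    \<union> (\<lambda>j. Inr (Inl (n, j))) ` {1..<k}"
  define B where "B = {Inr (Inl (n, k)) :: coord}"
  let ?P = "PiM A (\<lambda>_. borel) \<Otimes>\<^sub>M PiM B (\<lambda>_. borel) :: ((coord \<Rightarrow> real) \<times> (coord \<Rightarrow> real)) measure"
  define h where "h p = of_bool (fcfs_admitted D_at X_at R_at n u a k (fst p)) * ennreal (min (X_at n k (snd p)) a)"
    for p
  have h_meas: "h \<in> borel_measurable ?P"
    unfolding h_def by measurable
  have ind: "indep_var (PiM A (\<lambda>_. borel)) (sample A) (PiM B (\<lambda>_. borel)) (sample B)"
    using assms by (intro indep_sample) (auto simp: A_def B_def coords_def)
  have "admitted n u a k \<omega> = fcfs_admitted D_at X_at R_at n u a k (sample A \<omega>)" for \<omega>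
    by (rule admitted_sample) (auto simp: A_def)
  then have h_eq: "of_bool (admitted n u a k \<omega>) * ennreal (min (X n k \<omega>') a) = h (sample A \<omega>, sample B \<omega>')"
    for \<omega> \<omega>'
    unfolding h_def by (simp add: B_def X_at_sample)
  have "(\<integral>\<^sup>+\<omega>. of_bool (admitted n u a k \<omega>) * ennreal (min (X n k \<omega>) a) \<partial>M)
      = (\<integral>\<^sup>+\<omega>. (\<integral>\<^sup>+\<omega>'. h (sample A \<omega>, sample B \<omega>') \<partial>M) \<partial>M)"
    unfolding h_eq by (rule indep_var_nn_integral[OF ind h_meas])
  also have "\<dots> = (\<integral>\<^sup>+\<omega>. of_bool (admitted n u a k \<omega>) * (\<integral>\<^sup>+\<omega>'. ennreal (min (X n k \<omega>') a) \<partial>M) \<partial>M)"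
    by (simp add: h_eq[symmetric] nn_integral_cmult)
  also have "(\<integral>\<^sup>+\<omega>'. ennreal (min (X n k \<omega>') a) \<partial>M) = (\<integral>\<^sup>+\<omega>. ennreal (min (X 0 1 \<omega>) a) \<partial>M)"
    by (rule same_distr_nn_integral_eq[OF X_id[OF assms]]) simp_all
  finally show ?thesis
    by (simp add: nn_integral_multc emeasure_Collect_eq_nn_integral)
qed

text \<open>A form of Wald's identity: each admitted claim is independent of its own truncated service
  time, and the admitted truncated work is at most \<open>R\<^sub>n(u) + a\<close>.\<close>

lemma truncated_mean_times_offspring_le:
  assumes "a \<ge> 0"
  shows "(\<integral>\<^sup>+\<omega>. ennreal (min (X 0 1 \<omega>) a) \<partial>M) * (\<integral>\<^sup>+\<omega>. ennreal (real (offspring n u \<omega>)) \<partial>M)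
    \<le> ennreal (real u * mR + a)"
proof -
  define \<mu> where "\<mu> = (\<integral>\<^sup>+\<omega>. ennreal (min (X 0 1 \<omega>) a) \<partial>M)"
  have "\<mu> * (\<integral>\<^sup>+\<omega>. ennreal (real (offspring n u \<omega>)) \<partial>M)
      \<le> \<mu> * (\<integral>\<^sup>+\<omega>. (\<Sum>i. of_bool (admitted n u a (Suc i) \<omega>)) \<partial>M)"
    using assms by (intro mult_left_mono nn_integral_mono offspring_le_admitted) auto
  also have "\<dots> = (\<Sum>i. emeasure M {\<omega> \<in> space M. admitted n u a (Suc i) \<omega>} * \<mu>)"
    by (simp add: nn_integral_suminf emeasure_Collect_eq_nn_integral ennreal_suminf_cmult mult.commute)
  also have "\<dots> = (\<Sum>i. \<integral>\<^sup>+\<omega>. of_bool (admitted n u a (Suc i) \<omega>) * ennreal (min (X n (Suc i) \<omega>) a) \<partial>M)"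
    unfolding \<mu>_def by (simp add: nn_integral_admitted_service)
  also have "\<dots> = (\<integral>\<^sup>+\<omega>. (\<Sum>i. of_bool (admitted n u a (Suc i) \<omega>) * ennreal (min (X n (Suc i) \<omega>) a)) \<partial>M)"
    by (rule nn_integral_suminf[symmetric]) measurable
  also have "\<dots> \<le> (\<integral>\<^sup>+\<omega>. ennreal ((\<Sum>j=1..u. R n j \<omega>) + a) \<partial>M)"
    using assms by (intro nn_integral_mono admitted_truncated_work_le) auto
  also have "\<dots> = (\<integral>\<^sup>+\<omega>. (\<Sum>j=1..u. ennreal (R n j \<omega>)) + ennreal a \<partial>M)"
    using R_nonneg assms by (intro nn_integral_cong) (simp add: ennreal_plus sum_nonneg sum_ennreal)
  also have "\<dots> = (\<Sum>j=1..u. \<integral>\<^sup>+\<omega>. ennreal (R n j \<omega>) \<partial>M) + ennreal a"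
    by (simp add: nn_integral_add nn_integral_sum emeasure_space_1)
  also have "\<dots> = ennreal (real u * mR + a)"
    using mR_nonneg assms by (simp add: nn_integral_R ennreal_plus ennreal_mult ennreal_of_nat_eq_real_of_nat)
  finally show ?thesis
    by (simp add: \<mu>_def)
qed

lemma nn_integral_U_Suc_le:
  assumes a: "a \<ge> 0" and \<mu>: "0 < \<mu>" "ennreal \<mu> \<le> (\<integral>\<^sup>+\<omega>. ennreal (min (X 0 1 \<omega>) a) \<partial>M)"
  shows "(\<integral>\<^sup>+\<omega>. ennreal (real (U L (Suc n) \<omega>)) \<partial>M)
    \<le> ennreal (mR / \<mu>) * (\<integral>\<^sup>+\<omega>. ennreal (real (U L n \<omega>)) \<partial>M) + ennreal (a / \<mu>)"
proof -
  have offspring: "(\<integral>\<^sup>+\<omega>. ennreal (real (offspring n u \<omega>)) \<partial>M)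
      \<le> ennreal (mR / \<mu>) * ennreal (real u) + ennreal (a / \<mu>)" for u
  proof -
    let ?I = "\<integral>\<^sup>+\<omega>. ennreal (real (offspring n u \<omega>)) \<partial>M"
    have "ennreal \<mu> * ?I \<le> (\<integral>\<^sup>+\<omega>. ennreal (min (X 0 1 \<omega>) a) \<partial>M) * ?I"
      by (rule mult_right_mono[OF \<mu>(2)]) simp
    also have "\<dots> \<le> ennreal (real u * mR + a)"
      by (rule truncated_mean_times_offspring_le[OF a])
    finally have "ennreal \<mu> * ?I \<le> ennreal (real u * mR + a)" .
    have "?I = ennreal (1 / \<mu>) * (ennreal \<mu> * ?I)"
      using \<mu>(1) by (simp add: mult.assoc[symmetric] ennreal_mult[symmetric])
    also have "\<dots> \<le> ennreal (1 / \<mu>) * ennreal (real u * mR + a)"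
      by (rule mult_left_mono) (fact, simp)
    also have "\<dots> = ennreal (mR / \<mu> * real u + a / \<mu>)"
      using \<mu>(1) a mR_nonneg by (subst ennreal_mult[symmetric]) (simp_all add: field_simps)
    also have "\<dots> = ennreal (mR / \<mu> * real u) + ennreal (a / \<mu>)"
      using \<mu>(1) mR_nonneg a by (intro ennreal_plus) auto
    also have "ennreal (mR / \<mu> * real u) = ennreal (mR / \<mu>) * ennreal (real u)"
      using \<mu>(1) mR_nonneg by (intro ennreal_mult) auto
    finally show ?thesis .
  qed
  have "(\<integral>\<^sup>+\<omega>. ennreal (real (U L (Suc n) \<omega>)) \<partial>M)
      = (\<integral>\<^sup>+\<omega>. (\<integral>\<^sup>+\<omega>'. ennreal (real (offspring n (U L n \<omega>) \<omega>')) \<partial>M) \<partial>M)"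
    using nn_integral_markov[where \<psi> = "\<lambda>_. 1" and \<phi> = "\<lambda>_ b. ennreal (real b)", OF order_refl]
    by simp
  also have "\<dots> \<le> (\<integral>\<^sup>+\<omega>. ennreal (mR / \<mu>) * ennreal (real (U L n \<omega>)) + ennreal (a / \<mu>) \<partial>M)"
    by (intro nn_integral_mono offspring)
  also have "\<dots> = ennreal (mR / \<mu>) * (\<integral>\<^sup>+\<omega>. ennreal (real (U L n \<omega>)) \<partial>M) + ennreal (a / \<mu>)"
    by (simp add: nn_integral_add nn_integral_cmult emeasure_space_1)
  finally show ?thesis .
qed

lemma expected_population_bounded:
  assumes a: "a \<ge> 0" and \<mu>: "mR < \<mu>" "ennreal \<mu> \<le> (\<integral>\<^sup>+\<omega>. ennreal (min (X 0 1 \<omega>) a) \<partial>M)"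
  obtains B where "B \<ge> 0" "\<And>n. (\<integral>\<^sup>+\<omega>. ennreal (real (U L n \<omega>)) \<partial>M) \<le> ennreal B"
proof -
  define B where "B = max (real L) (a / (\<mu> - mR))"
  have B: "0 \<le> B" "mR / \<mu> * B + a / \<mu> \<le> B"
  proof -
    have "a / (\<mu> - mR) \<le> B"
      by (simp add: B_def)
    then have "mR * B + a \<le> \<mu> * B"
      using \<mu>(1) by (simp add: pos_divide_le_eq algebra_simps)
    then show "mR / \<mu> * B + a / \<mu> \<le> B"
      using \<mu>(1) mR_nonneg by (simp add: field_simps)
    show "0 \<le> B"
      by (simp add: B_def)
  qed
  have "(\<integral>\<^sup>+\<omega>. ennreal (real (U L n \<omega>)) \<partial>M) \<le> ennreal B" for n
  proof (induction n)
    case 0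
    then show ?case by (simp add: emeasure_space_1 B_def)
  next
    case (Suc n)
    have "0 < \<mu>"
      using \<mu>(1) mR_nonneg by linarith
    then have "(\<integral>\<^sup>+\<omega>. ennreal (real (U L (Suc n) \<omega>)) \<partial>M)
        \<le> ennreal (mR / \<mu>) * (\<integral>\<^sup>+\<omega>. ennreal (real (U L n \<omega>)) \<partial>M) + ennreal (a / \<mu>)"
      by (rule nn_integral_U_Suc_le[OF a _ \<mu>(2)])
    also have "\<dots> \<le> ennreal (mR / \<mu>) * ennreal B + ennreal (a / \<mu>)"
      by (intro add_mono mult_left_mono Suc.IH) simp_all
    also have "ennreal (mR / \<mu>) * ennreal B = ennreal (mR / \<mu> * B)"
      using \<mu>(1) mR_nonneg B(1) by (intro ennreal_mult[symmetric]) auto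
    also have "ennreal (mR / \<mu> * B) + ennreal (a / \<mu>) = ennreal (mR / \<mu> * B + a / \<mu>)"
      using \<mu>(1) mR_nonneg B(1) a by (intro ennreal_plus[symmetric]) auto
    also have "\<dots> \<le> ennreal B"
      using B(2) by (rule ennreal_leI)
    finally show ?case .
  qed
  with B(1) show ?thesis by (rule that)
qed

lemma prob_offspring_0_ge:
  "prob {\<omega> \<in> space M. D 0 1 \<omega> = 0} ^ u \<le> prob {\<omega> \<in> space M. offspring n u \<omega> = 0}"
proof (cases "u = 0")
  case False
  define J :: "coord set" where "J = (\<lambda>j. Inl (n, j)) ` {1..u}"
  have J: "J \<noteq> {}" "finite J" "J \<subseteq> coords"
    using False by (auto simp: J_def coords_def)
  have "prob (\<Inter>i\<in>J. coord_var i -` {0} \<inter> space M) = (\<Prod>i\<in>J. prob (coord_var i -` {0} \<inter> space M))"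
    using J by (intro indep_varsD[OF indep_coord_var]) auto
  also have "\<dots> = (\<Prod>j\<in>{1..u}. prob {\<omega> \<in> space M. D n j \<omega> = 0})"
    unfolding J_def by (subst prod.reindex) (auto simp: inj_on_def vimage_def Int_def conj_commute)
  also have "\<dots> = (\<Prod>j\<in>{1..u}. prob {\<omega> \<in> space M. D 0 1 \<omega> = 0})"
    by (intro prod.cong refl prob_D_eq) simp
  finally have "prob (\<Inter>i\<in>J. coord_var i -` {0} \<inter> space M) = prob {\<omega> \<in> space M. D 0 1 \<omega> = 0} ^ u"
    by simp
  moreover have "(\<Inter>i\<in>J. coord_var i -` {0} \<inter> space M) \<subseteq> {\<omega> \<in> space M. offspring n u \<omega> = 0}"
  proof
    fix \<omega> assume \<omega>: "\<omega> \<in> (\<Inter>i\<in>J. coord_var i -` {0} \<inter> space M)"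
    then have "\<forall>j\<in>{1..u}. D n j \<omega> = 0"
      by (auto simp: J_def)
    moreover have "\<omega> \<in> space M"
      using \<omega> J(1) by blast
    ultimately show "\<omega> \<in> {\<omega> \<in> space M. offspring n u \<omega> = 0}"
      by (simp add: fcfs_step_def)
  qed
  then have "prob (\<Inter>i\<in>J. coord_var i -` {0} \<inter> space M) \<le> prob {\<omega> \<in> space M. offspring n u \<omega> = 0}"
    by (rule finite_measure_mono) simp
  ultimately show ?thesis
    by simp
qed (simp add: prob_space)

lemma prob_offspring_0_lower:
  "of_bool (u = 0) + prob {\<omega> \<in> space M. D 0 1 \<omega> = 0} ^ K * of_bool (1 \<le> u \<and> u \<le> K)
    \<le> prob {\<omega> \<in> space M. offspring n u \<omega> = 0}"
proof (cases "u = 0")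
  case False
  let ?p = "prob {\<omega> \<in> space M. D 0 1 \<omega> = 0}"
  have "?p ^ K * of_bool (u \<le> K) \<le> ?p ^ u"
    by (cases "u \<le> K") (simp_all add: power_decreasing)
  then show ?thesis
    using False prob_offspring_0_ge[of u n] by simp
qed (simp add: prob_space)

lemma prob_U_Suc_0_ge:
  "prob {\<omega> \<in> space M. U L n \<omega> = 0}
     + prob {\<omega> \<in> space M. D 0 1 \<omega> = 0} ^ K * prob {\<omega> \<in> space M. 1 \<le> U L n \<omega> \<and> U L n \<omega> \<le> K}
   \<le> prob {\<omega> \<in> space M. U L (Suc n) \<omega> = 0}"
proof -
  define q where "q = prob {\<omega> \<in> space M. D 0 1 \<omega> = 0} ^ K"
  have q: "q \<ge> 0" by (simp add: q_def)
  have "ennreal (prob {\<omega> \<in> space M. U L n \<omega> = 0} + q * prob {\<omega> \<in> space M. 1 \<le> U L n \<omega> \<and> U L n \<omega> \<le> K})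
      = (\<integral>\<^sup>+\<omega>. of_bool (U L n \<omega> = 0) + ennreal q * of_bool (1 \<le> U L n \<omega> \<and> U L n \<omega> \<le> K) \<partial>M)"
    using q by (simp add: nn_integral_add nn_integral_cmult emeasure_Collect_eq_nn_integral[symmetric]
        emeasure_eq_measure ennreal_plus ennreal_mult)
  also have "\<dots> \<le> (\<integral>\<^sup>+\<omega>. ennreal (prob {\<omega>' \<in> space M. offspring n (U L n \<omega>) \<omega>' = 0}) \<partial>M)"
  proof (intro nn_integral_mono)
    fix \<omega>
    have "of_bool (U L n \<omega> = 0) + ennreal q * of_bool (1 \<le> U L n \<omega> \<and> U L n \<omega> \<le> K)
        = ennreal (of_bool (U L n \<omega> = 0) + q * of_bool (1 \<le> U L n \<omega> \<and> U L n \<omega> \<le> K))"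
      using q by (simp add: ennreal_mult)
    also have "\<dots> \<le> ennreal (prob {\<omega>' \<in> space M. offspring n (U L n \<omega>) \<omega>' = 0})"
      unfolding q_def by (intro ennreal_leI prob_offspring_0_lower)
    finally show "of_bool (U L n \<omega> = 0) + ennreal q * of_bool (1 \<le> U L n \<omega> \<and> U L n \<omega> \<le> K)
        \<le> ennreal (prob {\<omega>' \<in> space M. offspring n (U L n \<omega>) \<omega>' = 0})" .
  qed
  also have "\<dots> = (\<integral>\<^sup>+\<omega>. (\<integral>\<^sup>+\<omega>'. of_bool (offspring n (U L n \<omega>) \<omega>' = 0) \<partial>M) \<partial>M)"
    by (simp add: emeasure_eq_measure[symmetric] emeasure_Collect_eq_nn_integral)
  also have "\<dots> = emeasure M {\<omega> \<in> space M. U L (Suc n) \<omega> = 0}"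
    using nn_integral_markov[where \<psi> = "\<lambda>_. 1" and \<phi> = "\<lambda>_ b. of_bool (b = 0)", OF order_refl]
    by (simp add: emeasure_Collect_eq_nn_integral)
  finally have "ennreal (prob {\<omega> \<in> space M. U L n \<omega> = 0}
      + q * prob {\<omega> \<in> space M. 1 \<le> U L n \<omega> \<and> U L n \<omega> \<le> K})
    \<le> ennreal (prob {\<omega> \<in> space M. U L (Suc n) \<omega> = 0})"
    by (simp only: emeasure_eq_measure)
  then show ?thesis
    by (simp only: ennreal_le_iff[OF measure_nonneg] q_def)
qed

lemma summable_prob_U_between:
  assumes p0: "prob {\<omega> \<in> space M. D 0 1 \<omega> = 0} > 0"
  shows "summable (\<lambda>n. prob {\<omega> \<in> space M. 1 \<le> U L n \<omega> \<and> U L n \<omega> \<le> K})"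
proof -
  define q where "q = prob {\<omega> \<in> space M. D 0 1 \<omega> = 0} ^ K"
  define z where "z n = prob {\<omega> \<in> space M. U L n \<omega> = 0}" for n
  define b where "b n = prob {\<omega> \<in> space M. 1 \<le> U L n \<omega> \<and> U L n \<omega> \<le> K}" for n
  have q: "q > 0"
    using p0 by (simp add: q_def)
  have telescope: "q * (\<Sum>i<N. b i) \<le> z N - z 0" for N
  proof (induction N)
    case (Suc N)
    then show ?case
      using prob_U_Suc_0_ge[of L N K] by (simp add: z_def b_def q_def algebra_simps)
  qed simp
  have "(\<Sum>i<N. b i) \<le> 1 / q" for N
  proof -
    have "z N - z 0 \<le> 1"
      unfolding z_def by (smt (verit) measure_nonneg prob_le_1)
    then show ?thesis
      using telescope[of N] q by (simp add: field_simps)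
  qed
  then show ?thesis
    unfolding b_def by (intro summableI_nonneg_bounded[of _ "1 / q"]) auto
qed

lemma prob_U_gt_le:
  assumes "(\<integral>\<^sup>+\<omega>. ennreal (real (U L n \<omega>)) \<partial>M) \<le> ennreal B" "B \<ge> 0" "K > 0"
  shows "prob {\<omega> \<in> space M. K < U L n \<omega>} \<le> B / real K"
proof -
  have "ennreal (real K * prob {\<omega> \<in> space M. K < U L n \<omega>})
      = (\<integral>\<^sup>+\<omega>. ennreal (real K) * of_bool (K < U L n \<omega>) \<partial>M)"
    by (simp add: nn_integral_cmult emeasure_Collect_eq_nn_integral[symmetric] emeasure_eq_measure ennreal_mult)
  also have "\<dots> \<le> (\<integral>\<^sup>+\<omega>. ennreal (real (U L n \<omega>)) \<partial>M)"
    by (intro nn_integral_mono) (auto simp: of_bool_def)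
  also have "\<dots> \<le> ennreal B"
    by (fact assms(1))
  finally have "real K * prob {\<omega> \<in> space M. K < U L n \<omega>} \<le> B"
    using assms(2) by simp
  then show ?thesis
    using assms(3) by (simp add: field_simps)
qed

lemma prob_U_0_gt:
  assumes p0: "prob {\<omega> \<in> space M. D 0 1 \<omega> = 0} > 0" and \<epsilon>: "\<epsilon> > 0"
    and B: "B \<ge> 0" "\<And>n. (\<integral>\<^sup>+\<omega>. ennreal (real (U L n \<omega>)) \<partial>M) \<le> ennreal B"
  obtains n where "1 - \<epsilon> < prob {\<omega> \<in> space M. U L n \<omega> = 0}"
proof -
  define K where "K = nat \<lceil>2 * B / \<epsilon>\<rceil> + 1"
  have "2 * B / \<epsilon> < real K"
    unfolding K_def by linarith
  then have K: "K > 0" "B / real K < \<epsilon> / 2"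
    using \<epsilon> by (auto simp: K_def field_simps)
  have "(\<lambda>n. prob {\<omega> \<in> space M. 1 \<le> U L n \<omega> \<and> U L n \<omega> \<le> K}) \<longlonglongrightarrow> 0"
    by (rule summable_LIMSEQ_zero[OF summable_prob_U_between[OF p0]])
  then have "eventually (\<lambda>n. prob {\<omega> \<in> space M. 1 \<le> U L n \<omega> \<and> U L n \<omega> \<le> K} < \<epsilon> / 2) sequentially"
    using \<epsilon> by (intro order_tendstoD(2)) auto
  then obtain n where n: "prob {\<omega> \<in> space M. 1 \<le> U L n \<omega> \<and> U L n \<omega> \<le> K} < \<epsilon> / 2"
    by (auto simp: eventually_sequentially)
  have "prob {\<omega> \<in> space M. U L n \<omega> \<noteq> 0}
      \<le> prob ({\<omega> \<in> space M. 1 \<le> U L n \<omega> \<and> U L n \<omega> \<le> K} \<union> {\<omega> \<in> space M. K < U L n \<omega>})"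
    by (intro finite_measure_mono) auto
  also have "\<dots> \<le> prob {\<omega> \<in> space M. 1 \<le> U L n \<omega> \<and> U L n \<omega> \<le> K} + prob {\<omega> \<in> space M. K < U L n \<omega>}"
    by (intro measure_Un_le) auto
  also have "\<dots> < \<epsilon>"
    using n prob_U_gt_le[OF B(2)[of n] B(1) K(1)] K(2) by linarith
  finally have "1 - \<epsilon> < prob {\<omega> \<in> space M. U L n \<omega> = 0}"
    using prob_neg[of "\<lambda>\<omega>. U L n \<omega> = 0"] by simp
  then show ?thesis ..
qed

lemma prob_extinct_eq_1:
  assumes rmu: "mR < mX" and p0: "prob {\<omega> \<in> space M. D 0 1 \<omega> = 0} > 0"
  shows "prob (extinct L) = 1"
proof -
  define \<mu> where "\<mu> = (mR + mX) / 2"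
  have "(\<integral>\<^sup>+\<omega>. ennreal (X 0 1 \<omega>) \<partial>M) = ennreal mX"
    using X_integrable X_nonneg by (intro nn_integral_eq_integral) auto
  then have "ennreal \<mu> < (\<integral>\<^sup>+\<omega>. ennreal (X 0 1 \<omega>) \<partial>M)"
    using rmu mR_nonneg by (simp add: \<mu>_def ennreal_less_iff)
  then obtain a where a: "a \<ge> 0" "ennreal \<mu> < (\<integral>\<^sup>+\<omega>. ennreal (min (X 0 1 \<omega>) a) \<partial>M)"
    using nn_integral_truncation_gt[OF X_meas] by blast
  have "mR < \<mu>"
    using rmu by (simp add: \<mu>_def)
  then obtain B where B: "B \<ge> 0" "\<And>n. (\<integral>\<^sup>+\<omega>. ennreal (real (U L n \<omega>)) \<partial>M) \<le> ennreal B"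
    using expected_population_bounded[OF a(1) _ less_imp_le[OF a(2)]] by blast
  have "1 \<le> prob (extinct L)"
  proof (rule field_le_epsilon)
    fix \<epsilon> :: real assume "0 < \<epsilon>"
    then obtain n where "1 - \<epsilon> < prob {\<omega> \<in> space M. U L n \<omega> = 0}"
      using prob_U_0_gt[OF p0 _ B] by blast
    also have "\<dots> \<le> prob (extinct L)"
      by (intro finite_measure_mono) (auto simp: extinct_eq)
    finally show "1 \<le> prob (extinct L) + \<epsilon>" by linarith
  qed
  then show ?thesis
    by (intro antisym) simp_all
qed

end

theorem mainTheorem9:
  fixes M :: "'a measure"
    and D :: "nat \<Rightarrow> nat \<Rightarrow> 'a \<Rightarrow> nat"
    and X R :: "nat \<Rightarrow> nat \<Rightarrow> 'a \<Rightarrow> real"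
  assumes P: "prob_space M"
    and D_meas: "\<And>n k. D n k \<in> measurable M (count_space UNIV)"
    and X_meas: "\<And>n k. X n k \<in> borel_measurable M"
    and R_meas: "\<And>n k. R n k \<in> borel_measurable M"
    \<comment> \<open>mutual independence of all D_n^k, X_n^k, R_n^k (n \<ge> 0, k \<ge> 1)\<close>
    and indep: "prob_space.indep_vars M (\<lambda>_. borel)
         (\<lambda>i \<omega>. case i of Inl (n, k) \<Rightarrow> real (D n k \<omega>)
                       | Inr (Inl (n, k)) \<Rightarrow> X n k \<omega>
                       | Inr (Inr (n, k)) \<Rightarrow> R n k \<omega>)
         (Inl ` {(n, k). k \<ge> 1} \<union> Inr ` Inl ` {(n, k). k \<ge> 1} \<union> Inr ` Inr ` {(n, k). k \<ge> 1})"
    \<comment> \<open>identical distributions within each array\<close>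
    and D_id: "\<And>n k. k \<ge> 1 \<Longrightarrow> distr M (count_space UNIV) (D n k) = distr M (count_space UNIV) (D 0 1)"
    and X_id: "\<And>n k. k \<ge> 1 \<Longrightarrow> distr M borel (X n k) = distr M borel (X 0 1)"
    and R_id: "\<And>n k. k \<ge> 1 \<Longrightarrow> distr M borel (R n k) = distr M borel (R 0 1)"
    and X_nonneg: "\<And>n k \<omega>. \<omega> \<in> space M \<Longrightarrow> X n k \<omega> \<ge> 0"
    and R_nonneg: "\<And>n k \<omega>. \<omega> \<in> space M \<Longrightarrow> R n k \<omega> \<ge> 0"
    \<comment> \<open>continuous distribution function F of X\<close>
    and F_cont: "\<And>x. isCont (\<lambda>y. measure M {\<omega> \<in> space M. X 0 1 \<omega> \<le> y}) x"
    \<comment> \<open>(A1)\<close>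
    and D_int: "integrable M (\<lambda>\<omega>. real (D 0 1 \<omega>))"
    and m_gt1: "integral\<^sup>L M (\<lambda>\<omega>. real (D 0 1 \<omega>)) > 1"
    and R_int: "integrable M (R 0 1)"
    and X_int: "integrable M (X 0 1)"
    and mu_pos: "integral\<^sup>L M (X 0 1) > 0"
    \<comment> \<open>(A2)\<close>
    and p0: "measure M {\<omega> \<in> space M. D 0 1 \<omega> = 0} > 0"
    and pk: "\<exists>k\<ge>2. measure M {\<omega> \<in> space M. D 0 1 \<omega> = k} > 0"
    \<comment> \<open>(A3) for the fcfs-process started at 1\<close>
    and irred: "\<And>j. j \<ge> 1 \<Longrightarrow> \<exists>n. measure M {\<omega> \<in> space M. fcfs_proc D X R 1 n \<omega> = j} > 0"
    \<comment> \<open>(A4)\<close>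
    and D_sq: "integrable M (\<lambda>\<omega>. (real (D 0 1 \<omega>))\<^sup>2)"
    and X_sq: "integrable M (\<lambda>\<omega>. (X 0 1 \<omega>)\<^sup>2)"
    and R_sq: "integrable M (\<lambda>\<omega>. (R 0 1 \<omega>)\<^sup>2)"
  shows "(integral\<^sup>L M (R 0 1) < integral\<^sup>L M (X 0 1) \<longrightarrow> fcfs_ext_prob M D X R 1 = 1)
       \<and> (integral\<^sup>L M (R 0 1) > integral\<^sup>L M (X 0 1) \<longrightarrow>
            fcfs_ext_prob M D X R 1 < 1 \<and> (\<lambda>L. fcfs_ext_prob M D X R L) \<longlonglongrightarrow> 0)"
proof -
  interpret fcfs_model M D X R
    using P D_meas X_meas R_meas indep D_id X_id R_id X_nonneg R_nonneg D_sq X_sq R_sq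
    by (intro fcfs_model.intro fcfs_model_axioms.intro) assumption+
  have ext_prob: "fcfs_ext_prob M D X R L = prob (extinct L)" for L
    by (simp add: fcfs_ext_prob_def extinct_def)
  show ?thesis
    unfolding ext_prob
    using prob_extinct_eq_1[OF _ p0] prob_extinct_lt_1[OF m_gt1 mu_pos _ irred]
      prob_extinct_tendsto_0[OF m_gt1 mu_pos] by blast
qed

end
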